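(* Let $\Omega\subset\mathbb{C}^d$ be a bounded open set which is locally convexifiable and has finite local line type $L$, and let $\{(V_\xi,\Phi_\xi):\xi\in\partial\Omega\}$ be a good locally convex atlas. Then there exist $c,\epsilon>0$ such that $$K_\Omega(p;v)\le K_{\Omega\cap V_\xi}(p;v)\le e^{c\,\delta_\Omega(p)^{1/L}}K_\Omega(p;v)$$ for every $\xi\in\partial\Omega$, every $p\in B_\epsilon(\xi)\cap\Omega$ and every $v\in\mathbb{C}^d$.
   Context: $K_\Omega(p;v)=\inf\{|\zeta|: f:\Delta\to\Omega\text{ holomorphic}, f(0)=p, df(\zeta)=v\}$ is the infinitesimal Kobayashi metric. $\delta_\Omega(p)$ is the Euclidean distance to $\mathbb{C}^d\setminus\Omega$, and $\delta_\Omega(p;v)=\inf\{\|q-p\|:q\in(p+\mathbb{C}v)\setminus\Omega\}$. A local convex chart at $\xi\in\partial\Omega$ is a pair $(V_\xi,\Phi_\xi)$ with $V_\xi$ a neighborhood of $\xi$ and $\Phi_\xi:V_\xi\to\mathbb{C}^d$ a biholomorphism onto its image such that $\Omega_\xi:=\Phi_\xi(V_\xi\cap\Omega)$ is convex; a locally convex atlas is a choice of such a chart for every $\xi\in\partial\Omega$, and $\Omega$ is locally convexifiable if one exists. $\Omega$ has finite local line type $L$ if $\partial\Omega$ is a $C^L$ hypersurface and there is a locally convex atlas such that each hypersurface $\Phi_\xi(\partial\Omega\cap V_\xi)$ has line type at most $L$ near $\Phi_\xi(\xi)$, with equality attained for some $\xi$; here the line type of a hypersurface $\{r=0\}$ at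 $x$ is the supremum over non-trivial complex affine $\ell:\mathbb{C}\to\mathbb{C}^d$ with $\ell(0)=x$ of the order of vanishing of $r\circ\ell$ at $0$. A locally convex atlas is good if there are $C,\tau>0$ such that for every $\xi\in\partial\Omega$: $B_\tau(\xi)\subset V_\xi$; $\delta_{\Omega_\xi}(p;v)\le C\delta_{\Omega_\xi}(p)^{1/L}$ for all $p\in\Omega_\xi$ and $v\neq0$; and $C^{-1}\|p-q\|\le\|\Phi_\xi(p)-\Phi_\xi(q)\|\le C\|p-q\|$ for all $p,q\in V_\xi$. *)

theory Defs
  imports "HOL-Analysis.Analysis"
begin

text \<open>Points of C^d are modelled as complex^'n, 'n a finite index type (d = CARD('n)).\<close>

fun Ck_on :: "nat \<Rightarrow> ('a::euclidean_space) set \<Rightarrow> ('a \<Rightarrow> real) \<Rightarrow> bool" where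
  "Ck_on 0 U f = continuous_on U f"
| "Ck_on (Suc k) U f = (f differentiable_on U \<and>
      (\<forall>b\<in>Basis. Ck_on k U (\<lambda>x. frechet_derivative f (at x) b)))"

definition holo_map :: "(complex^'n \<Rightarrow> complex^'m) \<Rightarrow> (complex^'n) set \<Rightarrow> bool" where
  "holo_map f S \<longleftrightarrow> (\<forall>x\<in>S. \<exists>L. (f has_derivative L) (at x) \<and>
       (\<forall>c y. L (c *s y) = c *s L y))"

definition biholo_onto_image :: "(complex^'n \<Rightarrow> complex^'n) \<Rightarrow> (complex^'n) set \<Rightarrow> bool" where
  "biholo_onto_image F V \<longleftrightarrow> holo_map F V \<and> inj_on F V \<and> holo_map (inv_into V F) (F ` V)"

definition holo_disc :: "(complex \<Rightarrow> complex^'n) \<Rightarrow> bool" where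
  "holo_disc f \<longleftrightarrow> (\<forall>i. (\<lambda>z. f z $ i) holomorphic_on ball 0 1)"

definition disc_deriv0 :: "(complex \<Rightarrow> complex^'n) \<Rightarrow> complex^'n" where
  "disc_deriv0 f = (\<chi> i. deriv (\<lambda>z. f z $ i) 0)"

definition kobayashi :: "(complex^'n) set \<Rightarrow> complex^'n \<Rightarrow> complex^'n \<Rightarrow> real" where
  "kobayashi \<Omega> p v = Inf {cmod \<zeta> | \<zeta>. \<exists>f. holo_disc f \<and> f ` ball 0 1 \<subseteq> \<Omega> \<and> f 0 = p
        \<and> \<zeta> *s disc_deriv0 f = v}"

definition bdist :: "(complex^'n) set \<Rightarrow> complex^'n \<Rightarrow> real" where
  "bdist \<Omega> p = infdist p (UNIV - \<Omega>)"

definition bdist_dir :: "(complex^'n) set \<Rightarrow> complex^'n \<Rightarrow> complex^'n \<Rightarrow> ereal" where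
  "bdist_dir \<Omega> p v = (INF q \<in> {p + z *s v | z. True} - \<Omega>. ereal (norm (q - p)))"

definition local_defining_fn :: "nat \<Rightarrow> (complex^'n) set \<Rightarrow> (complex^'n) set \<Rightarrow> (complex^'n \<Rightarrow> real) \<Rightarrow> bool" where
  "local_defining_fn k M U r \<longleftrightarrow> open U \<and> Ck_on k U r \<and>
      (\<forall>y\<in>U. \<exists>h. frechet_derivative r (at y) h \<noteq> 0) \<and> M \<inter> U = {y\<in>U. r y = 0}"

definition Ck_hypersurface :: "nat \<Rightarrow> (complex^'n) set \<Rightarrow> bool" where
  "Ck_hypersurface k M \<longleftrightarrow> (\<forall>x\<in>M. \<exists>U r. x \<in> U \<and> local_defining_fn k M U r)"

definition ord_vanish :: "(complex \<Rightarrow> real) \<Rightarrow> enat" where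
  "ord_vanish g = Sup {enat m | m. \<exists>C. eventually (\<lambda>z. \<bar>g z\<bar> \<le> C * cmod z ^ m) (at 0)}"

definition line_type :: "(complex^'n) set \<Rightarrow> complex^'n \<Rightarrow> enat" where
  "line_type M x = (let r = (SOME r. \<exists>U. x \<in> U \<and> local_defining_fn 1 M U r) in
      (SUP a \<in> {a. a \<noteq> 0}. ord_vanish (\<lambda>z. r (x + z *s a))))"

definition locally_convex_atlas :: "(complex^'n) set \<Rightarrow> (complex^'n \<Rightarrow> (complex^'n) set)
      \<Rightarrow> (complex^'n \<Rightarrow> complex^'n \<Rightarrow> complex^'n) \<Rightarrow> bool" where
  "locally_convex_atlas \<Omega> V \<Phi> \<longleftrightarrow> (\<forall>\<xi>\<in>frontier \<Omega>. open (V \<xi>) \<and> \<xi> \<in> V \<xi> \<and>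
      biholo_onto_image (\<Phi> \<xi>) (V \<xi>) \<and> convex (\<Phi> \<xi> ` (V \<xi> \<inter> \<Omega>)))"

definition locally_convexifiable :: "(complex^'n) set \<Rightarrow> bool" where
  "locally_convexifiable \<Omega> \<longleftrightarrow> (\<exists>V \<Phi>. locally_convex_atlas \<Omega> V \<Phi>)"

definition finite_local_line_type :: "(complex^'n) set \<Rightarrow> nat \<Rightarrow> bool" where
  "finite_local_line_type \<Omega> L \<longleftrightarrow> Ck_hypersurface L (frontier \<Omega>) \<and>
    (\<exists>V \<Phi>. locally_convex_atlas \<Omega> V \<Phi> \<and>
       (\<forall>\<xi>\<in>frontier \<Omega>. \<exists>W. open W \<and> \<Phi> \<xi> \<xi> \<in> W \<and>
          (\<forall>x\<in>\<Phi> \<xi> ` (frontier \<Omega> \<inter> V \<xi>) \<inter> W.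
              line_type (\<Phi> \<xi> ` (frontier \<Omega> \<inter> V \<xi>)) x \<le> enat L)) \<and>
       (\<exists>\<xi>\<in>frontier \<Omega>. line_type (\<Phi> \<xi> ` (frontier \<Omega> \<inter> V \<xi>)) (\<Phi> \<xi> \<xi>) = enat L))"

definition good_atlas :: "(complex^'n) set \<Rightarrow> nat \<Rightarrow> (complex^'n \<Rightarrow> (complex^'n) set)
      \<Rightarrow> (complex^'n \<Rightarrow> complex^'n \<Rightarrow> complex^'n) \<Rightarrow> bool" where
  "good_atlas \<Omega> L V \<Phi> \<longleftrightarrow> locally_convex_atlas \<Omega> V \<Phi> \<and>
    (\<exists>C \<tau>. C > 0 \<and> \<tau> > 0 \<and> (\<forall>\<xi>\<in>frontier \<Omega>.
       ball \<xi> \<tau> \<subseteq> V \<xi> \<and>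
       (\<forall>p\<in>\<Phi> \<xi> ` (V \<xi> \<inter> \<Omega>). \<forall>v. v \<noteq> 0 \<longrightarrow>
          bdist_dir (\<Phi> \<xi> ` (V \<xi> \<inter> \<Omega>)) p v
            \<le> ereal (C * bdist (\<Phi> \<xi> ` (V \<xi> \<inter> \<Omega>)) p powr (1 / real L))) \<and>
       (\<forall>p\<in>V \<xi>. \<forall>q\<in>V \<xi>. norm (p - q) / C \<le> norm (\<Phi> \<xi> p - \<Phi> \<xi> q) \<and>
          norm (\<Phi> \<xi> p - \<Phi> \<xi> q) \<le> C * norm (p - q))))"

end

theory Submission
  imports Defs "HOL-Complex_Analysis.Complex_Analysis" "HOL-Homology.Invariance_of_Domain"
begin

text \<open>Rescaling a holomorphic disc \<open>f\<close> centred at \<open>p\<close> shows \<open>K\<^sub>\<Omega>\<^sub>\<inter>\<^sub>V(p;v) \<le> K\<^sub>\<Omega>(p;v) / r\<close> as soon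
  as every such disc maps the disc of radius \<open>r\<close> into \<open>V\<close>; so it suffices to show that discs
  centred at distance \<open>\<delta>\<close> from the boundary stay in the chart up to radius \<open>1 - M \<delta>\<close>, since
  \<open>1 / (1 - M \<delta>) \<le> exp (2 M \<delta>\<^bsup>1/L\<^esup>)\<close>. In the convex chart \<open>G\<close>, a disc \<open>F\<close> satisfies
  \<open>|F'(w)| \<le> 2 \<delta>\<^sub>G(F w; F'(w)) / (\<rho> - |w|)\<close> (Kobayashi lower bound on convex domains), the line
  type gives \<open>\<delta>\<^sub>G(x;v) \<le> C \<delta>\<^sub>G(x)\<^bsup>1/L\<^esup>\<close>, and Harnack's inequality for the separating linear
  functional gives \<open>\<delta>\<^sub>G(F w) \<lesssim> \<delta> / (\<rho> - |w|)\<close>. Hence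
  \<open>|F'(w)| \<lesssim> \<delta>\<^bsup>1/L\<^esup> (\<rho> - |w|)\<^bsup>-1/L-1\<^esup>\<close>, which is integrable along radii: the disc moves
  only \<open>O((\<delta> / (1 - |z|))\<^bsup>1/L\<^esup>)\<close> before leaving the chart, and cannot leave it before
  \<open>|z| = 1 - M \<delta>\<close>.\<close>

lemma norm_smult_vec: "norm (c *s (y::complex^'n)) = cmod c * norm y"
  unfolding norm_vec_def by (simp add: L2_set_right_distrib norm_mult)

definition hermitian_inner :: "complex^'n \<Rightarrow> complex^'n \<Rightarrow> complex" where
  "hermitian_inner x y = (\<Sum>i\<in>UNIV. x$i * cnj (y$i))"

lemma Re_hermitian_inner: "Re (hermitian_inner x y) = inner x y"
  unfolding hermitian_inner_def inner_vec_def by (simp add: Re_sum inner_complex_def)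

lemma hermitian_inner_smult: "hermitian_inner (c *s x) y = c * hermitian_inner x y"
  unfolding hermitian_inner_def by (simp add: sum_distrib_left mult.assoc)

lemma hermitian_inner_smult_right: "hermitian_inner x (c *s y) = cnj c * hermitian_inner x y"
  unfolding hermitian_inner_def by (simp add: sum_distrib_left algebra_simps)

lemma hermitian_inner_minus: "hermitian_inner (- x) z = - hermitian_inner x z"
  unfolding hermitian_inner_def by (simp add: sum_negf)

lemma norm_hermitian_inner_le: "cmod (hermitian_inner x y) \<le> norm x * norm y"
proof (cases "hermitian_inner x y = 0")
  case True then show ?thesis by simp
next
  case False
  define \<theta> where "\<theta> = hermitian_inner x y / cmod (hermitian_inner x y)"
  have \<theta>: "cmod \<theta> = 1" using False by (simp add: \<theta>_def norm_divide)
  have "hermitian_inner x (\<theta> *s y) = complex_of_real (cmod (hermitian_inner x y))"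
    using False unfolding hermitian_inner_smult_right \<theta>_def
    by (simp add: complex_norm_square[symmetric] power2_eq_square field_simps)
  then have "cmod (hermitian_inner x y) = inner x (\<theta> *s y)"
    by (metis Re_hermitian_inner Re_complex_of_real)
  also have "\<dots> \<le> norm x * norm (\<theta> *s y)" by (rule norm_cauchy_schwarz)
  finally show ?thesis by (simp add: norm_smult_vec \<theta>)
qed

definition vec_holomorphic_on :: "complex set \<Rightarrow> (complex \<Rightarrow> complex^'n) \<Rightarrow> bool" where
  "vec_holomorphic_on S h \<longleftrightarrow> (\<forall>i. (\<lambda>z. h z $ i) holomorphic_on S)"

definition vec_deriv :: "(complex \<Rightarrow> complex^'n) \<Rightarrow> complex \<Rightarrow> complex^'n" where
  "vec_deriv h z = (\<chi> i. deriv (\<lambda>z. h z $ i) z)"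

lemma holo_disc_iff: "holo_disc f \<longleftrightarrow> vec_holomorphic_on (ball 0 1) f"
  by (simp add: holo_disc_def vec_holomorphic_on_def)

lemma disc_deriv0_eq: "disc_deriv0 f = vec_deriv f 0"
  by (simp add: disc_deriv0_def vec_deriv_def)

lemma vec_holomorphic_on_subset:
  "vec_holomorphic_on S h \<Longrightarrow> T \<subseteq> S \<Longrightarrow> vec_holomorphic_on T h"
  unfolding vec_holomorphic_on_def using holomorphic_on_subset by blast

lemma vec_holomorphic_on_has_derivative:
  fixes h :: "complex \<Rightarrow> complex^'n"
  assumes "vec_holomorphic_on S h" "open S" "z \<in> S"
  shows "(h has_derivative (\<lambda>c. c *s vec_deriv h z)) (at z)"
proof -
  have "((\<lambda>w. h w \<bullet> b) has_derivative (\<lambda>c. (c *s vec_deriv h z) \<bullet> b)) (at z)"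
    if "b \<in> Basis" for b
  proof -
    obtain i u where b: "b = axis i u" "u \<in> Basis"
      using \<open>b \<in> Basis\<close> unfolding Basis_vec_def by auto
    have "((\<lambda>w. h w $ i) has_field_derivative deriv (\<lambda>w. h w $ i) z) (at z)"
      using assms holomorphic_derivI unfolding vec_holomorphic_on_def by blast
    then have "((\<lambda>w. h w $ i) has_derivative (\<lambda>c. deriv (\<lambda>w. h w $ i) z * c)) (at z)"
      by (simp add: has_field_derivative_def)
    from bounded_linear.has_derivative[OF bounded_linear_inner_left this, of u]
    show ?thesis by (simp add: b inner_axis vec_deriv_def mult.commute)
  qed
  then show ?thesis using has_derivative_componentwise_within by blast
qed

lemma vec_holomorphic_on_imp_continuous_on:
  "vec_holomorphic_on S h \<Longrightarrow> open S \<Longrightarrow> continuous_on S h"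
  by (meson continuous_at_imp_continuous_on has_derivative_continuous
      vec_holomorphic_on_has_derivative)

lemma vec_holomorphic_on_affine:
  assumes "vec_holomorphic_on S h" "\<And>l. l \<in> T \<Longrightarrow> w + s * l \<in> S"
  shows "vec_holomorphic_on T (\<lambda>l. h (w + s * l))"
  unfolding vec_holomorphic_on_def
proof
  fix i
  have "((\<lambda>z. h z $ i) \<circ> (\<lambda>l. w + s * l)) holomorphic_on T"
    using assms by (intro holomorphic_on_compose_gen[where t = S])
      (auto simp: vec_holomorphic_on_def intro!: holomorphic_intros)
  then show "(\<lambda>l. h (w + s * l) $ i) holomorphic_on T" by (simp add: o_def)
qed

lemma vec_deriv_affine:
  assumes "vec_holomorphic_on S h" "open S" "w + s * l \<in> S"
  shows "vec_deriv (\<lambda>l. h (w + s * l)) l = s *s vec_deriv h (w + s * l)"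
  unfolding vec_eq_iff
proof
  fix i
  have "((\<lambda>z. h z $ i) has_field_derivative deriv (\<lambda>z. h z $ i) (w + s * l)) (at (w + s * l))"
    using assms by (auto simp: vec_holomorphic_on_def intro: holomorphic_derivI)
  moreover have "((\<lambda>l. w + s * l) has_field_derivative s) (at l)"
    by (auto intro!: derivative_eq_intros)
  ultimately have "((\<lambda>l. h (w + s * l) $ i) has_field_derivative deriv (\<lambda>z. h z $ i) (w + s * l) * s) (at l)"
    using DERIV_chain2 by fastforce
  then show "vec_deriv (\<lambda>l. h (w + s * l)) l $ i = (s *s vec_deriv h (w + s * l)) $ i"
    by (simp add: vec_deriv_def DERIV_imp_deriv mult.commute)
qed

lemma vec_holomorphic_on_holo_map:
  assumes "vec_holomorphic_on S f" "open S" "f ` S \<subseteq> V" "holo_map \<Phi> V"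
  shows "vec_holomorphic_on S (\<lambda>z. \<Phi> (f z))"
  unfolding vec_holomorphic_on_def holomorphic_on_open[OF \<open>open S\<close>]
proof (intro allI ballI)
  fix i z assume "z \<in> S"
  obtain D where D: "(\<Phi> has_derivative D) (at (f z))" "\<And>c y. D (c *s y) = c *s D y"
    using assms \<open>z \<in> S\<close> unfolding holo_map_def by blast
  from has_derivative_compose[OF vec_holomorphic_on_has_derivative[OF assms(1,2) \<open>z \<in> S\<close>] D(1)]
  have "((\<lambda>z. \<Phi> (f z)) has_derivative (\<lambda>c. c *s D (vec_deriv f z))) (at z)"
    by (simp add: o_def D(2))
  from bounded_linear.has_derivative[OF bounded_linear_vec_nth this, of i]
  show "\<exists>d. ((\<lambda>z. \<Phi> (f z) $ i) has_field_derivative d) (at z)"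
    by (auto simp: has_field_derivative_def mult.commute[of _ "D (vec_deriv f z) $ i"])
qed

lemma hermitian_inner_has_field_derivative:
  assumes "vec_holomorphic_on S h" "open S" "z \<in> S"
  shows "((\<lambda>z. hermitian_inner (h z - q) n) has_field_derivative hermitian_inner (vec_deriv h z) n) (at z)"
proof -
  have "((\<lambda>z. h z $ i) has_field_derivative deriv (\<lambda>z. h z $ i) z) (at z)" for i
    using assms holomorphic_derivI unfolding vec_holomorphic_on_def by blast
  then have "((\<lambda>z. \<Sum>i\<in>UNIV. (h z $ i - q $ i) * cnj (n $ i)) has_field_derivative
      (\<Sum>i\<in>UNIV. deriv (\<lambda>z. h z $ i) z * cnj (n $ i))) (at z)"
    by (auto intro!: derivative_eq_intros)
  then show ?thesis by (simp add: hermitian_inner_def vec_deriv_def)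
qed

lemma hermitian_inner_holomorphic_on:
  assumes "vec_holomorphic_on S h" "open S"
  shows "(\<lambda>z. hermitian_inner (h z - q) n) holomorphic_on S"
  using hermitian_inner_has_field_derivative[OF assms] holomorphic_on_open[OF assms(2)] by blast

lemma cayley_real_part_bound:
  fixes x y a b s :: real
  assumes "x < 0" "a < 0" "0 \<le> s" "s < 1"
    and "(x-a)^2 + (y-b)^2 \<le> s^2 * ((x+a)^2 + (y-b)^2)"
  shows "\<bar>x\<bar> \<le> \<bar>a\<bar> * (1 + s) / (1 - s)"
proof -
  have "(s^2 - 1) * (y-b)^2 \<le> 0"
    using assms by (intro mult_nonpos_nonneg) (auto simp: power_le_one_iff abs_square_le_1)
  then have "(x-a)^2 \<le> s^2 * (x+a)^2"
    using assms(5) by (simp add: algebra_simps)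
  then have "\<bar>x - a\<bar> \<le> \<bar>s * (x + a)\<bar>"
    by (simp add: power_mult_distrib[symmetric] abs_le_square_iff)
  also have "\<dots> = s * (- x - a)" using assms by (simp add: abs_mult)
  finally have "- x * (1 - s) \<le> - a * (1 + s)" by (auto simp: algebra_simps)
  then show ?thesis using assms by (simp add: field_simps)
qed

lemma left_halfplane_cayley:
  fixes g :: "complex \<Rightarrow> complex"
  assumes hol: "g holomorphic_on ball 0 1" and neg: "\<forall>z\<in>ball 0 1. Re (g z) < 0"
  shows "\<And>z. z \<in> ball 0 1 \<Longrightarrow> g z + cnj (g 0) \<noteq> 0"
    and "(\<lambda>z. (g z - g 0) / (g z + cnj (g 0))) holomorphic_on ball 0 1"
    and "\<And>z. z \<in> ball 0 1 \<Longrightarrow> cmod ((g z - g 0) / (g z + cnj (g 0))) < 1"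
proof -
  show nz: "g z + cnj (g 0) \<noteq> 0" if "z \<in> ball 0 1" for z
  proof
    assume "g z + cnj (g 0) = 0"
    then have "Re (g z + cnj (g 0)) = 0" by simp
    moreover have "Re (g z) < 0" "Re (g 0) < 0" using neg that by auto
    ultimately show False by simp
  qed
  show "(\<lambda>z. (g z - g 0) / (g z + cnj (g 0))) holomorphic_on ball 0 1"
    using nz by (intro holomorphic_intros hol) auto
  show "cmod ((g z - g 0) / (g z + cnj (g 0))) < 1" if "z \<in> ball 0 1" for z
  proof -
    have e: "cmod (g z - g 0) ^ 2 = (Re (g z) - Re (g 0))^2 + (Im (g z) - Im (g 0))^2"
      "cmod (g z + cnj (g 0)) ^ 2 = (Re (g z) + Re (g 0))^2 + (Im (g z) - Im (g 0))^2"
      by (simp_all add: cmod_power2)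
    have "cmod (g z - g 0) ^ 2 < cmod (g z + cnj (g 0)) ^ 2"
      unfolding e using bspec[OF neg that] bspec[OF neg, of 0]
      by (simp add: power2_eq_square algebra_simps mult_pos_pos mult_neg_neg)
    then have "cmod (g z - g 0) < cmod (g z + cnj (g 0))" by (simp add: power2_less_imp_less)
    then show ?thesis using nz[OF that] by (simp add: norm_divide divide_less_eq)
  qed
qed

lemma left_halfplane_deriv_bound:
  fixes g :: "complex \<Rightarrow> complex"
  assumes hol: "g holomorphic_on ball 0 1" and neg: "\<And>z. z \<in> ball 0 1 \<Longrightarrow> Re (g z) < 0"
  shows "cmod (deriv g 0) \<le> 2 * \<bar>Re (g 0)\<bar>"
proof -
  define \<phi> where "\<phi> = (\<lambda>z. (g z - g 0) / (g z + cnj (g 0)))"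
  have "\<forall>z\<in>ball 0 1. Re (g z) < 0" using neg by blast
  note \<phi> = left_halfplane_cayley[OF hol this, folded \<phi>_def]
  have \<phi>0: "\<phi> 0 = 0" and \<phi>1: "\<And>z. cmod z < 1 \<Longrightarrow> cmod (\<phi> z) < 1"
    using \<phi>(3) by (simp_all add: \<phi>_def)
  have gd: "(g has_field_derivative deriv g 0) (at 0)"
    using hol by (auto intro: holomorphic_derivI)
  have "(\<phi> has_field_derivative
      ((deriv g 0 * (g 0 + cnj (g 0)) - (g 0 - g 0) * deriv g 0) / (g 0 + cnj (g 0))^2)) (at 0)"
    unfolding \<phi>_def using \<phi>(1)[of 0] by (auto intro!: derivative_eq_intros gd simp: power2_eq_square)
  moreover have "g 0 + cnj (g 0) = complex_of_real (2 * Re (g 0))" by (simp add: complex_eq_iff)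
  ultimately have "deriv \<phi> 0 = deriv g 0 / complex_of_real (2 * Re (g 0))"
    using \<phi>(1)[of 0] by (simp add: DERIV_imp_deriv power2_eq_square)
  then have "cmod (deriv g 0) / (2 * \<bar>Re (g 0)\<bar>) \<le> 1"
    using Schwarz_Lemma(2)[OF \<phi>(2) \<phi>0 \<phi>1, of 0] by (simp add: norm_divide)
  then show ?thesis using neg[of 0] by (simp add: divide_le_eq)
qed

lemma left_halfplane_harnack:
  fixes g :: "complex \<Rightarrow> complex"
  assumes hol: "g holomorphic_on ball 0 1" and neg: "\<And>z. z \<in> ball 0 1 \<Longrightarrow> Re (g z) < 0"
    and z: "z \<in> ball 0 1"
  shows "\<bar>Re (g z)\<bar> \<le> \<bar>Re (g 0)\<bar> * (1 + cmod z) / (1 - cmod z)"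
proof -
  define \<phi> where "\<phi> = (\<lambda>z. (g z - g 0) / (g z + cnj (g 0)))"
  have "\<forall>z\<in>ball 0 1. Re (g z) < 0" using neg by blast
  note \<phi> = left_halfplane_cayley[OF hol this, folded \<phi>_def]
  have \<phi>0: "\<phi> 0 = 0" and \<phi>1: "\<And>z. cmod z < 1 \<Longrightarrow> cmod (\<phi> z) < 1"
    using \<phi>(3) by (simp_all add: \<phi>_def)
  define w a where "w = g z" and "a = g 0"
  have s: "cmod (\<phi> z) \<le> cmod z" using Schwarz_Lemma(1)[OF \<phi>(2) \<phi>0 \<phi>1] z by simp
  have "cmod (w - a) = cmod (\<phi> z) * cmod (w + cnj a)"
    using \<phi>(1)[OF z] by (simp add: \<phi>_def w_def a_def norm_divide)
  then have "cmod (w - a) ^ 2 = cmod (\<phi> z) ^ 2 * cmod (w + cnj a) ^ 2"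
    by (simp add: power_mult_distrib)
  then have "(Re w - Re a)^2 + (Im w - Im a)^2 \<le> cmod (\<phi> z)^2 * ((Re w + Re a)^2 + (Im w - Im a)^2)"
    by (simp add: cmod_power2)
  from cayley_real_part_bound[OF _ _ _ _ this]
  have "\<bar>Re w\<bar> \<le> \<bar>Re a\<bar> * (1 + cmod (\<phi> z)) / (1 - cmod (\<phi> z))"
    using neg[OF z] neg[of 0] \<phi>1[of z] z by (simp add: w_def a_def)
  also have "\<dots> \<le> \<bar>Re a\<bar> * (1 + cmod z) / (1 - cmod z)"
  proof -
    have "(1 + cmod (\<phi> z)) / (1 - cmod (\<phi> z)) \<le> (1 + cmod z) / (1 - cmod z)"
      using s z by (simp add: divide_simps) (simp add: algebra_simps)
    then show ?thesis
      by (simp add: mult_left_mono times_divide_eq_right[symmetric] del: times_divide_eq_right)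
  qed
  finally show ?thesis by (simp add: w_def a_def)
qed

lemma open_convex_strict_separation:
  fixes G :: "(complex^'n) set"
  assumes "open G" "convex G" "q \<notin> G"
  obtains n where "norm n = 1" "\<And>y. y \<in> G \<Longrightarrow> inner (y - q) n < 0"
proof (cases "G = {}")
  case True
  obtain b :: "complex^'n" where "b \<in> Basis" using nonempty_Basis by blast
  show ?thesis by (rule that[of b]) (auto simp: True norm_Basis \<open>b \<in> Basis\<close>)
next
  case False
  have cv: "convex ((+) (-q) ` G)" using assms(2) by (rule convex_translation)
  have "0 \<notin> (+) (-q) ` G" using assms(3) by auto
  from separating_hyperplane_set_0[OF cv this]
  obtain a where a: "a \<noteq> 0" "\<And>y. y \<in> G \<Longrightarrow> 0 \<le> inner a (y - q)" by auto
  have strict: "0 < inner a (y - q)" if y: "y \<in> G" for y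
  proof (rule ccontr)
    assume "\<not> 0 < inner a (y - q)"
    then have z: "inner a (y - q) = 0" using a(2)[OF y] by simp
    obtain e where e: "e > 0" "ball y e \<subseteq> G" using assms(1) y open_contains_ball by blast
    define y' where "y' = y - (e / 2 / norm a) *\<^sub>R a"
    have "dist y y' = e / 2" using a(1) e by (simp add: y'_def dist_norm)
    then have "y' \<in> G" using e by auto
    moreover have "inner a (y' - q) = - (e / 2) * norm a"
      using z a(1) by (simp add: y'_def inner_diff_right algebra_simps
          power2_norm_eq_inner[symmetric] power2_eq_square)
    moreover have "- (e / 2) * norm a < 0" using e a(1) by simp
    ultimately show False using a(2) by fastforce
  qed
  show ?thesis
  proof (rule that[of "- (1 / norm a) *\<^sub>R a"])
    show "norm (- (1 / norm a) *\<^sub>R a) = 1" using a(1) by simp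
    show "inner (y - q) (- (1 / norm a) *\<^sub>R a) < 0" if "y \<in> G" for y
      using strict[OF that] a(1) by (simp add: inner_commute)
  qed
qed

text \<open>The two estimates below compose the disc with the complex linear functional
  \<open>hermitian_inner (- - q) n\<close>, whose real part separates \<open>G\<close> from a point \<open>q \<notin> G\<close>; this
  maps the disc into the left half-plane.\<close>

lemma bdist_dir_convex_disc_lower:
  fixes h :: "complex \<Rightarrow> complex^'n"
  assumes G: "open G" "convex G" and h: "vec_holomorphic_on (ball 0 1) h" "h ` ball 0 1 \<subseteq> G"
  shows "ereal (norm (vec_deriv h 0) / 2) \<le> bdist_dir G (h 0) (vec_deriv h 0)"
  unfolding bdist_dir_def
proof (rule INF_greatest)
  define u where "u = vec_deriv h 0"
  fix q assume "q \<in> {h 0 + z *s vec_deriv h 0 |z. True} - G"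
  then obtain z where q: "q = h 0 + z *s u" "q \<notin> G" by (auto simp: u_def)
  obtain n where n: "\<And>y. y \<in> G \<Longrightarrow> inner (y - q) n < 0"
    using open_convex_strict_separation[OF G q(2)] by blast
  define g where "g w = hermitian_inner (h w - q) n" for w
  have neg: "Re (g w) < 0" if "w \<in> ball 0 1" for w
    using n[of "h w"] h(2) that by (fastforce simp: g_def Re_hermitian_inner)
  have "g holomorphic_on ball 0 1" unfolding g_def by (rule hermitian_inner_holomorphic_on[OF h(1) open_ball])
  from left_halfplane_deriv_bound[OF this neg]
  have "cmod (deriv g 0) \<le> 2 * \<bar>Re (g 0)\<bar>" .
  moreover have "deriv g 0 = hermitian_inner u n"
    unfolding g_def u_def using hermitian_inner_has_field_derivative[OF h(1) open_ball, of 0]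
    by (simp add: DERIV_imp_deriv)
  moreover have g0: "g 0 = - z * hermitian_inner u n"
    by (simp add: g_def q hermitian_inner_minus hermitian_inner_smult)
  ultimately have "cmod (hermitian_inner u n) \<le> 2 * cmod z * cmod (hermitian_inner u n)"
    using abs_Re_le_cmod[of "g 0"] by (simp add: norm_mult)
  moreover have "hermitian_inner u n \<noteq> 0" using neg[of 0] g0 by auto
  ultimately have "1 \<le> 2 * cmod z" by simp
  then have "norm u \<le> 2 * norm (z *s u)"
    using mult_right_mono[of 1 "2 * cmod z" "norm u"] by (simp add: norm_smult_vec)
  then show "ereal (norm (vec_deriv h 0) / 2) \<le> ereal (norm (q - h 0))"
    by (simp add: q u_def)
qed

lemma bdist_convex_disc_upper:
  fixes h :: "complex \<Rightarrow> complex^'n"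
  assumes G: "open G" "convex G" and h: "vec_holomorphic_on (ball 0 1) h" "h ` ball 0 1 \<subseteq> G"
    and q: "q \<notin> G" and w: "w \<in> ball 0 1"
  shows "bdist G (h w) \<le> norm (h 0 - q) * (1 + cmod w) / (1 - cmod w)"
proof -
  obtain n where n: "norm n = 1" "\<And>y. y \<in> G \<Longrightarrow> inner (y - q) n < 0"
    using open_convex_strict_separation[OF G q] by blast
  define g where "g w = hermitian_inner (h w - q) n" for w
  have neg: "Re (g w) < 0" if "w \<in> ball 0 1" for w
    using n(2)[of "h w"] h(2) that by (fastforce simp: g_def Re_hermitian_inner)
  have "bdist G y \<le> \<bar>inner (y - q) n\<bar>" for y
  proof -
    define y' where "y' = y - (inner (y - q) n) *\<^sub>R n"
    have "inner n n = 1" using n(1) by (simp add: power2_norm_eq_inner[symmetric])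
    then have "inner (y' - q) n = 0" by (simp add: y'_def inner_diff_left)
    then have "y' \<in> UNIV - G" using n(2)[of y'] by auto
    then have "bdist G y \<le> dist y y'" unfolding bdist_def by (rule infdist_le)
    then show ?thesis by (simp add: y'_def dist_norm n(1))
  qed
  then have "bdist G (h w) \<le> \<bar>Re (g w)\<bar>" by (simp add: g_def Re_hermitian_inner)
  also have "\<dots> \<le> \<bar>Re (g 0)\<bar> * (1 + cmod w) / (1 - cmod w)"
    by (rule left_halfplane_harnack[OF _ neg w])
      (unfold g_def, rule hermitian_inner_holomorphic_on[OF h(1) open_ball])
  also have "\<dots> \<le> norm (h 0 - q) * (1 + cmod w) / (1 - cmod w)"
    using Cauchy_Schwarz_ineq2[of "h 0 - q" n] n(1) w
    by (intro divide_right_mono mult_right_mono) (auto simp: g_def Re_hermitian_inner)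
  finally show ?thesis .
qed

lemma schwarz_lemma_vec:
  fixes h :: "complex \<Rightarrow> complex^'n"
  assumes h: "vec_holomorphic_on (ball 0 1) h"
    and B: "\<And>w. w \<in> ball 0 1 \<Longrightarrow> norm (h w - h 0) < B"
    and w: "w \<in> ball 0 1"
  shows "norm (h w - h 0) \<le> B * cmod w"
proof (cases "h w = h 0")
  case True
  then show ?thesis using B[of 0] by simp
next
  case False
  have Bp: "0 < B" using B[of 0] by simp
  define m where "m = (1 / norm (h w - h 0)) *\<^sub>R (h w - h 0)"
  have m: "norm m = 1" using False by (simp add: m_def)
  define g where "g z = hermitian_inner (h z - h 0) m / complex_of_real B" for z
  have holg: "g holomorphic_on ball 0 1"
    unfolding g_def using hermitian_inner_holomorphic_on[OF h open_ball] by (intro holomorphic_intros) auto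
  have gn: "norm (g z) < 1" if "norm z < 1" for z
    using norm_hermitian_inner_le[of "h z - h 0" m] B[of z] that m Bp by (simp add: g_def norm_divide)
  have "norm (h w - h 0) / B = Re (g w)"
    using False by (simp add: g_def Re_hermitian_inner Re_divide_of_real m_def
        power2_norm_eq_inner[symmetric] power2_eq_square)
  also have "\<dots> \<le> cmod w"
    using Schwarz_Lemma(1)[OF holg _ gn, of w] w complex_Re_le_cmod[of "g w"]
    by (simp add: g_def hermitian_inner_def)
  finally show ?thesis using Bp by (simp add: divide_le_eq mult.commute)
qed

lemma disc_oscillation:
  fixes f :: "complex \<Rightarrow> complex^'n"
  assumes f: "vec_holomorphic_on (ball 0 1) f"
    and B: "\<And>x y. x \<in> ball 0 1 \<Longrightarrow> y \<in> ball 0 1 \<Longrightarrow> norm (f x - f y) < B"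
    and w: "w \<in> ball 0 1" and z: "cmod (z - w) < 1 - cmod w"
  shows "norm (f z - f w) \<le> B * cmod (z - w) / (1 - cmod w)"
proof -
  define s where "s = complex_of_real (1 - cmod w)"
  have s: "cmod s = 1 - cmod w" "s \<noteq> 0"
    using w unfolding s_def norm_of_real by auto
  have inb: "w + s * l \<in> ball 0 1" if "l \<in> ball 0 1" for l
  proof -
    have "cmod (w + s * l) \<le> cmod w + cmod s * cmod l"
      using norm_triangle_ineq[of w "s * l"] by (simp add: norm_mult)
    also have "\<dots> < cmod w + cmod s * 1"
      using that s w by (intro add_strict_left_mono mult_strict_left_mono) auto
    finally show ?thesis using s by simp
  qed
  define l where "l = (z - w) / s"
  have l: "l \<in> ball 0 1" "w + s * l = z"
    using z s w by (simp_all add: l_def norm_divide divide_less_eq)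
  have "norm (f (w + s * l) - f (w + s * 0)) \<le> B * cmod l"
  proof (rule schwarz_lemma_vec[OF vec_holomorphic_on_affine[OF f inb] _ l(1)])
    show "norm (f (w + s * l') - f (w + s * 0)) < B" if "l' \<in> ball 0 1" for l'
      using B[OF inb[OF that] w] by simp
  qed
  then show ?thesis using l s by (simp add: l_def norm_divide)
qed

definition kobayashi_set :: "(complex^'n) set \<Rightarrow> complex^'n \<Rightarrow> complex^'n \<Rightarrow> real set" where
  "kobayashi_set \<Omega> p v = {cmod \<zeta> | \<zeta>. \<exists>f. holo_disc f \<and> f ` ball 0 1 \<subseteq> \<Omega> \<and> f 0 = p
        \<and> \<zeta> *s disc_deriv0 f = v}"

lemma kobayashi_eq_Inf: "kobayashi \<Omega> p v = Inf (kobayashi_set \<Omega> p v)"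
  unfolding kobayashi_def kobayashi_set_def ..

lemma bdd_below_kobayashi_set: "bdd_below (kobayashi_set \<Omega> p v)"
  unfolding kobayashi_set_def by (rule bdd_belowI[of _ 0]) auto

lemma kobayashi_set_mono: "U \<subseteq> W \<Longrightarrow> kobayashi_set U p v \<subseteq> kobayashi_set W p v"
  unfolding kobayashi_set_def by blast

lemma kobayashi_set_rescale:
  assumes f: "holo_disc f" "f 0 = p" "\<zeta> *s disc_deriv0 f = v" "f ` ball 0 r \<subseteq> W"
    and r: "0 < r" "r \<le> 1"
  shows "cmod \<zeta> / r \<in> kobayashi_set W p v"
proof -
  have inb: "0 + complex_of_real r * z \<in> ball 0 1" if "z \<in> ball 0 1" for z
    using that r mult_left_le_one_le[of "cmod z" r] by (simp add: norm_mult)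
  have f': "vec_holomorphic_on (ball 0 1) f" using f(1) by (simp add: holo_disc_iff)
  define g where "g z = f (0 + complex_of_real r * z)" for z
  have "holo_disc g"
    unfolding g_def holo_disc_iff by (rule vec_holomorphic_on_affine[OF f' inb])
  moreover have "disc_deriv0 g = complex_of_real r *s disc_deriv0 f"
    unfolding g_def disc_deriv0_eq using vec_deriv_affine[OF f' open_ball, of 0 _ 0] by simp
  then have "(\<zeta> / complex_of_real r) *s disc_deriv0 g = v"
    using r f(3) by (simp add: vector_smult_assoc)
  moreover have "g ` ball 0 1 \<subseteq> W"
  proof
    fix y assume "y \<in> g ` ball 0 1"
    then obtain z where "z \<in> ball 0 1" "y = g z" by blast
    moreover have "complex_of_real r * z \<in> ball 0 r"
      using \<open>z \<in> ball 0 1\<close> r by (simp add: norm_mult)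
    ultimately show "y \<in> W" using f(4) by (auto simp: g_def)
  qed
  ultimately have "cmod (\<zeta> / complex_of_real r) \<in> kobayashi_set W p v"
    unfolding kobayashi_set_def using f(2) by (force simp: g_def)
  then show ?thesis using r by (simp add: norm_divide)
qed

lemma kobayashi_set_nonempty:
  assumes "open U" "p \<in> U"
  shows "kobayashi_set U p v \<noteq> {}"
proof -
  obtain e where e: "0 < e" "e \<le> 1" "ball p e \<subseteq> U"
  proof -
    obtain e where "0 < e" "ball p e \<subseteq> U" using assms open_contains_ball by blast
    then show ?thesis using that[of "min e 1"] subset_ball[of "min e 1" e p] by auto
  qed
  define k where "k = 1 / (norm v + 1)"
  have k: "0 < k" by (simp add: k_def add_nonneg_pos)
  define f where "f z = p + (complex_of_real k * z) *s v" for z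
  have hd: "holo_disc f" unfolding holo_disc_def f_def by (auto intro!: holomorphic_intros)
  have "((\<lambda>z. f z $ i) has_field_derivative complex_of_real k * v $ i) (at 0)" for i
    unfolding f_def by (auto intro!: derivative_eq_intros)
  then have d: "disc_deriv0 f = complex_of_real k *s v"
    by (simp add: disc_deriv0_def vec_eq_iff DERIV_imp_deriv)
  have "f ` ball 0 e \<subseteq> U"
  proof
    fix y assume "y \<in> f ` ball 0 e"
    then obtain z where z: "cmod z < e" "y = f z" by auto
    have "k * norm v < 1"
      using norm_ge_zero[of v] by (simp add: k_def divide_less_eq not_less add_nonneg_nonneg)
    then have "k * norm v * cmod z \<le> cmod z"
      using k by (simp add: mult_left_le_one_le)
    then have "dist p y \<le> cmod z"
      using k by (simp add: z f_def dist_norm norm_smult_vec norm_mult mult_ac)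
    then show "y \<in> U" using z e by auto
  qed
  moreover have "(1 / k) *s disc_deriv0 f = v" using k by (simp add: d vector_smult_assoc)
  ultimately have "cmod (1 / k) / e \<in> kobayashi_set U p v"
    using kobayashi_set_rescale[OF hd _ _ _ e(1,2)] by (simp add: f_def)
  then show ?thesis by blast
qed

lemma kobayashi_nonneg:
  assumes "open \<Omega>" "p \<in> \<Omega>"
  shows "0 \<le> kobayashi \<Omega> p v"
  unfolding kobayashi_eq_Inf
  by (rule cInf_greatest[OF kobayashi_set_nonempty[OF assms]]) (auto simp: kobayashi_set_def)

lemma kobayashi_antimono:
  assumes "open U" "p \<in> U" "U \<subseteq> W"
  shows "kobayashi W p v \<le> kobayashi U p v"
  unfolding kobayashi_eq_Inf
  by (rule cInf_superset_mono[OF kobayashi_set_nonempty[OF assms(1,2)] bdd_below_kobayashi_set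
        kobayashi_set_mono[OF assms(3)]])

definition discs_stay_in :: "(complex^'n) set \<Rightarrow> complex^'n \<Rightarrow> real \<Rightarrow> (complex^'n) set \<Rightarrow> bool" where
  "discs_stay_in \<Omega> p r W \<longleftrightarrow>
     (\<forall>f. holo_disc f \<and> f ` ball 0 1 \<subseteq> \<Omega> \<and> f 0 = p \<longrightarrow> f ` ball 0 r \<subseteq> W)"

lemma discs_stay_inD:
  "discs_stay_in \<Omega> p r W \<Longrightarrow> holo_disc f \<Longrightarrow> f ` ball 0 1 \<subseteq> \<Omega> \<Longrightarrow> f 0 = p \<Longrightarrow>
    f ` ball 0 r \<subseteq> W"
  unfolding discs_stay_in_def by blast

lemma discs_stay_in_center:
  fixes p :: "complex^'n"
  assumes "discs_stay_in \<Omega> p r W" "p \<in> \<Omega>" "0 < r"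
  shows "p \<in> W"
proof -
  define f :: "complex \<Rightarrow> complex^'n" where "f = (\<lambda>_. p)"
  have "f ` ball 0 r \<subseteq> W"
    by (rule discs_stay_inD[OF assms(1)]) (use assms(2) in \<open>auto simp: f_def holo_disc_def\<close>)
  moreover have "0 \<in> ball (0::complex) r" using assms(3) by simp
  ultimately show ?thesis unfolding f_def by blast
qed

lemma kobayashi_localize:
  assumes "open \<Omega>" "p \<in> \<Omega>" and r: "0 < r" "r \<le> 1" and discs: "discs_stay_in \<Omega> p r V"
  shows "kobayashi (\<Omega> \<inter> V) p v \<le> kobayashi \<Omega> p v / r"
proof -
  have "r * kobayashi (\<Omega> \<inter> V) p v \<le> kobayashi \<Omega> p v"
    unfolding kobayashi_eq_Inf
  proof (rule cInf_greatest[OF kobayashi_set_nonempty[OF assms(1,2)]])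
    fix x assume "x \<in> kobayashi_set \<Omega> p v"
    then obtain \<zeta> f where x: "x = cmod \<zeta>" "holo_disc f" "f ` ball 0 1 \<subseteq> \<Omega>" "f 0 = p"
      "\<zeta> *s disc_deriv0 f = v" unfolding kobayashi_set_def by blast
    have "f ` ball 0 r \<subseteq> V" using discs_stay_inD[OF discs x(2-4)] .
    moreover have "f ` ball 0 r \<subseteq> \<Omega>" using x(3) subset_ball[OF r(2), of 0] by blast
    ultimately have "f ` ball 0 r \<subseteq> \<Omega> \<inter> V" by blast
    from kobayashi_set_rescale[OF x(2,4,5) this r]
    have "Inf (kobayashi_set (\<Omega> \<inter> V) p v) \<le> cmod \<zeta> / r"
      by (rule cInf_lower[OF _ bdd_below_kobayashi_set])
    then show "r * Inf (kobayashi_set (\<Omega> \<inter> V) p v) \<le> x"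
      using r by (simp add: x(1) field_simps)
  qed
  then show ?thesis using r by (simp add: field_simps)
qed

lemma discs_stay_in_ball:
  assumes B: "\<And>x y. x \<in> \<Omega> \<Longrightarrow> y \<in> \<Omega> \<Longrightarrow> norm (x - y) < B" and r: "0 < r" "r \<le> 1"
  shows "discs_stay_in \<Omega> p r (ball p (B * r))"
  unfolding discs_stay_in_def
proof (intro allI impI subsetI)
  fix f y assume "holo_disc f \<and> f ` ball 0 1 \<subseteq> \<Omega> \<and> f 0 = p" and "y \<in> f ` ball 0 r"
  then have f: "vec_holomorphic_on (ball 0 1) f" "f ` ball 0 1 \<subseteq> \<Omega>" "f 0 = p"
    by (simp_all add: holo_disc_iff)
  obtain z where z: "cmod z < r" "y = f z" using \<open>y \<in> f ` ball 0 r\<close> by auto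
  have B': "norm (f x - f x') < B" if "x \<in> ball 0 1" "x' \<in> ball 0 1" for x x'
    using B f(2) that by (meson image_subset_iff)
  then have "0 < B" using B'[of 0 0] by simp
  have "norm (f z - f 0) \<le> B * cmod (z - 0) / (1 - cmod 0)"
    by (rule disc_oscillation[OF f(1) B']) (use z r in auto)
  also have "\<dots> < B * r" using z \<open>0 < B\<close> by simp
  finally show "y \<in> ball p (B * r)" using f z by (simp add: dist_norm norm_minus_commute)
qed

lemma bdist_convex_subdisc:
  fixes F :: "complex \<Rightarrow> complex^'n"
  assumes G: "open G" "convex G"
    and F: "vec_holomorphic_on (ball 0 \<rho>) F" "F ` ball 0 \<rho> \<subseteq> G" and \<rho>: "\<rho> \<le> 1"
    and q: "q \<notin> G" and w: "w \<in> ball 0 \<rho>"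
  shows "bdist G (F w) \<le> 2 * norm (F 0 - q) / (\<rho> - cmod w)"
proof -
  have "cmod w < \<rho>" using w by simp
  then have \<rho>0: "0 < \<rho>" using norm_ge_zero[of w] by linarith
  have inb: "0 + complex_of_real \<rho> * l \<in> ball 0 \<rho>" if "l \<in> ball 0 1" for l
    using that \<rho>0 by (simp add: norm_mult)
  define h where "h l = F (0 + complex_of_real \<rho> * l)" for l
  have h: "vec_holomorphic_on (ball 0 1) h" "h ` ball 0 1 \<subseteq> G"
    unfolding h_def by (rule vec_holomorphic_on_affine[OF F(1) inb]) (use F(2) inb in auto)
  define l0 where "l0 = w / complex_of_real \<rho>"
  have l0: "cmod l0 = cmod w / \<rho>" "h l0 = F w" using \<rho>0 by (simp_all add: l0_def h_def norm_divide)
  then have "l0 \<in> ball 0 1" using w \<rho>0 by simp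
  from bdist_convex_disc_upper[OF G h q this]
  have "bdist G (F w) \<le> norm (F 0 - q) * (1 + cmod w / \<rho>) / (1 - cmod w / \<rho>)"
    unfolding l0 by (simp add: h_def)
  also have "\<dots> = norm (F 0 - q) * (\<rho> + cmod w) / (\<rho> - cmod w)"
    using \<rho>0 w by (simp add: field_simps)
  also have "\<dots> \<le> 2 * norm (F 0 - q) / (\<rho> - cmod w)"
  proof (rule divide_right_mono)
    show "norm (F 0 - q) * (\<rho> + cmod w) \<le> 2 * norm (F 0 - q)"
      using \<rho> w by (subst mult.commute, intro mult_right_mono) auto
  qed (use w in simp)
  finally show ?thesis .
qed

lemma vec_deriv_bound_convex:
  fixes F :: "complex \<Rightarrow> complex^'n"
  assumes G: "open G" "convex G"
    and line_type: "\<And>x u. x \<in> G \<Longrightarrow> u \<noteq> 0 \<Longrightarrow> bdist_dir G x u \<le> ereal (C * bdist G x powr \<alpha>)"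
    and C: "0 \<le> C" and \<alpha>: "0 \<le> \<alpha>"
    and F: "vec_holomorphic_on (ball 0 \<rho>) F" "F ` ball 0 \<rho> \<subseteq> G" and \<rho>: "\<rho> \<le> 1"
    and q: "q \<notin> G" and w: "w \<in> ball 0 \<rho>"
  shows "norm (vec_deriv F w) \<le> 2 * C * (2 * norm (F 0 - q)) powr \<alpha> * (\<rho> - cmod w) powr (- \<alpha> - 1)"
proof -
  define d where "d = \<rho> - cmod w"
  have d: "0 < d" using w by (simp add: d_def)
  define s where "s = complex_of_real d"
  have inb: "w + s * l \<in> ball 0 \<rho>" if "l \<in> ball 0 1" for l
  proof -
    have "cmod (w + s * l) \<le> cmod w + d * cmod l"
      using norm_triangle_ineq[of w "s * l"] d by (simp add: s_def norm_mult)
    also have "\<dots> < cmod w + d * 1"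
      using that d by (intro add_strict_left_mono mult_strict_left_mono) auto
    finally show ?thesis by (simp add: d_def)
  qed
  define h where "h = (\<lambda>l. F (w + s * l))"
  have h: "vec_holomorphic_on (ball 0 1) h" "h ` ball 0 1 \<subseteq> G"
    unfolding h_def by (rule vec_holomorphic_on_affine[OF F(1) inb]) (use F(2) inb in auto)
  define u where "u = vec_deriv h 0"
  have u: "u = s *s vec_deriv F w"
    using vec_deriv_affine[OF F(1) open_ball, of w s 0] w by (simp add: u_def h_def)
  have "norm u \<le> 2 * (C * bdist G (F w) powr \<alpha>)"
  proof (cases "u = 0")
    case False
    have "F w \<in> G" using F(2) w by blast
    have "ereal (norm u / 2) \<le> bdist_dir G (h 0) u"
      unfolding u_def by (rule bdist_dir_convex_disc_lower[OF G h])
    also have "\<dots> \<le> ereal (C * bdist G (F w) powr \<alpha>)"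
      using line_type[OF \<open>F w \<in> G\<close> False] by (simp add: h_def)
    finally show ?thesis by simp
  qed (use C in simp)
  also have "\<dots> \<le> 2 * (C * (2 * norm (F 0 - q) / d) powr \<alpha>)"
    using bdist_convex_subdisc[OF G F \<rho> q w] \<alpha> C
    by (simp add: d_def powr_mono2 bdist_def infdist_nonneg mult_left_mono)
  also have "\<dots> = 2 * C * (2 * norm (F 0 - q)) powr \<alpha> * d powr (- \<alpha>)"
    using d by (simp add: powr_divide powr_minus_divide)
  finally have "d * norm (vec_deriv F w) \<le> 2 * C * (2 * norm (F 0 - q)) powr \<alpha> * d powr (- \<alpha>)"
    using d by (simp add: u s_def norm_smult_vec)
  then show ?thesis
    using d by (simp add: d_def powr_diff powr_minus field_simps)
qed

lemma radial_increment_bound: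
  fixes F :: "complex \<Rightarrow> complex^'n"
  assumes F: "vec_holomorphic_on (ball 0 \<rho>) F" and \<alpha>: "0 < \<alpha>" and K: "0 \<le> K"
    and bound: "\<And>w. w \<in> ball 0 \<rho> \<Longrightarrow> norm (vec_deriv F w) \<le> K * (\<rho> - cmod w) powr (- \<alpha> - 1)"
    and e: "cmod e = 1" and t: "0 \<le> t" "t < \<rho>"
  shows "norm (F (complex_of_real t * e) - F 0) \<le> K / \<alpha> * (\<rho> - t) powr (- \<alpha>)"
proof (cases "t = 0")
  case False
  define \<gamma> where "\<gamma> = (\<lambda>x. F (complex_of_real x * e))"
  define \<phi> where "\<phi> = (\<lambda>x. K / \<alpha> * (\<rho> - x) powr (- \<alpha>))"
  have inb: "complex_of_real x * e \<in> ball 0 \<rho>" if "0 \<le> x" "x < \<rho>" for x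
    using that e by (simp add: norm_mult)
  have \<gamma>': "(\<gamma> has_vector_derivative e *s vec_deriv F (complex_of_real x * e)) (at x)"
    if "0 \<le> x" "x < \<rho>" for x
  proof -
    have "((\<lambda>x. complex_of_real x * e) has_derivative (\<lambda>y. complex_of_real y * e)) (at x)"
      by (auto intro!: derivative_eq_intros)
    from has_derivative_compose[OF this vec_holomorphic_on_has_derivative[OF F open_ball inb[OF that]]]
    have "(\<gamma> has_derivative (\<lambda>y. (complex_of_real y * e) *s vec_deriv F (complex_of_real x * e))) (at x)"
      by (simp add: \<gamma>_def o_def)
    moreover have "(\<lambda>y. (complex_of_real y * e) *s vec_deriv F (complex_of_real x * e))
        = (\<lambda>y. y *\<^sub>R (e *s vec_deriv F (complex_of_real x * e)))"
      by (simp add: fun_eq_iff vec_eq_iff scaleR_conv_of_real[where 'a=complex] mult.assoc)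
    ultimately show ?thesis by (simp add: has_vector_derivative_def)
  qed
  have \<phi>': "(\<phi> has_vector_derivative K * (\<rho> - x) powr (- \<alpha> - 1)) (at x)" if "x < \<rho>" for x
  proof -
    have "((\<lambda>x. \<rho> - x) has_real_derivative -1) (at x)" by (auto intro!: derivative_eq_intros)
    from DERIV_cmult[OF DERIV_fun_powr[OF this], of "K / \<alpha>" "- \<alpha>"] that \<alpha>
    show ?thesis by (simp add: \<phi>_def has_real_derivative_iff_has_vector_derivative)
  qed
  have "norm (\<gamma> t - \<gamma> 0) \<le> \<phi> t - \<phi> 0"
  proof (rule differentiable_bound_general)
    show "continuous_on {0..t} \<gamma>" "continuous_on {0..t} \<phi>"
      using has_vector_derivative_continuous \<gamma>' \<phi>' t
      by (force intro!: continuous_at_imp_continuous_on)+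
    show "norm (e *s vec_deriv F (complex_of_real x * e)) \<le> K * (\<rho> - x) powr (- \<alpha> - 1)"
      if "0 < x" "x < t" for x
      using bound[OF inb[of x]] that t e by (simp add: norm_smult_vec norm_mult)
  qed (use \<gamma>' \<phi>' t False in auto)
  moreover have "0 \<le> \<phi> 0" using K \<alpha> by (simp add: \<phi>_def)
  ultimately show ?thesis by (simp add: \<gamma>_def \<phi>_def)
qed (use K \<alpha> in simp)

lemma chart_disc_radial_bound:
  fixes f :: "complex \<Rightarrow> complex^'n" and \<Phi> :: "complex^'n \<Rightarrow> complex^'n"
    and V \<Omega> :: "(complex^'n) set"
  defines "G \<equiv> \<Phi> ` (V \<inter> \<Omega>)"
  assumes \<Phi>: "holo_map \<Phi> V" "open G" "convex G"
    and bilip: "\<And>x y. x \<in> V \<Longrightarrow> y \<in> V \<Longrightarrow> norm (x - y) / C \<le> norm (\<Phi> x - \<Phi> y) \<and>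
        norm (\<Phi> x - \<Phi> y) \<le> C * norm (x - y)"
    and line_type: "\<And>x u. x \<in> G \<Longrightarrow> u \<noteq> 0 \<Longrightarrow> bdist_dir G x u \<le> ereal (C * bdist G x powr \<alpha>)"
    and C: "0 < C" and \<alpha>: "0 < \<alpha>"
    and f: "vec_holomorphic_on (ball 0 \<rho>) f" "f ` ball 0 \<rho> \<subseteq> V \<inter> \<Omega>" and \<rho>: "\<rho> \<le> 1"
    and y0: "y0 \<in> V - \<Omega>" and e: "cmod e = 1" and t: "0 \<le> t" "t < \<rho>"
  shows "norm (f (complex_of_real t * e) - f 0)
      \<le> 2 * C^2 / \<alpha> * (2 * C * norm (f 0 - y0) / (\<rho> - t)) powr \<alpha>"
proof -
  define F where "F = (\<lambda>z. \<Phi> (f z))"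
  have F: "vec_holomorphic_on (ball 0 \<rho>) F" "F ` ball 0 \<rho> \<subseteq> G"
    using vec_holomorphic_on_holo_map[OF f(1) open_ball _ \<Phi>(1)] f(2)
    by (auto simp: F_def G_def)
  have "\<Phi> y0 \<notin> G"
  proof
    assume "\<Phi> y0 \<in> G"
    then obtain x where "x \<in> V" "x \<in> \<Omega>" "\<Phi> x = \<Phi> y0" by (auto simp: G_def)
    then show False using bilip[of x y0] y0 C by (auto simp: divide_le_0_iff)
  qed
  define D where "D = norm (F 0 - \<Phi> y0)"
  have f0: "f 0 \<in> V" using f(2) t by auto
  have D: "D \<le> C * norm (f 0 - y0)" using bilip[OF f0, of y0] y0 by (simp add: D_def F_def)
  define K where "K = 2 * C * (2 * D) powr \<alpha>"
  have "norm (F (complex_of_real t * e) - F 0) \<le> K / \<alpha> * (\<rho> - t) powr (- \<alpha>)"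
  proof (rule radial_increment_bound[OF F(1) \<alpha> _ _ e t])
    show "0 \<le> K" using C by (simp add: K_def)
    show "norm (vec_deriv F w) \<le> K * (\<rho> - cmod w) powr (- \<alpha> - 1)" if "w \<in> ball 0 \<rho>" for w
      using vec_deriv_bound_convex[OF \<Phi>(2,3) line_type _ _ F \<rho> \<open>\<Phi> y0 \<notin> G\<close> that] C \<alpha>
      by (simp add: K_def D_def)
  qed
  also have "\<dots> = 2 * C / \<alpha> * (2 * D / (\<rho> - t)) powr \<alpha>"
    using t by (simp add: K_def powr_divide powr_minus_divide D_def)
  also have "\<dots> \<le> 2 * C / \<alpha> * (2 * C * norm (f 0 - y0) / (\<rho> - t)) powr \<alpha>"
    using D C \<alpha> t by (intro mult_left_mono powr_mono2 divide_right_mono) (auto simp: D_def)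
  finally have "C * norm (F (complex_of_real t * e) - F 0)
      \<le> C * (2 * C / \<alpha> * (2 * C * norm (f 0 - y0) / (\<rho> - t)) powr \<alpha>)"
    by (rule mult_left_mono) (use C in simp)
  moreover have "f (complex_of_real t * e) \<in> V" using f(2) t e by (auto simp: norm_mult)
  ultimately show ?thesis
    using bilip[OF _ f0, of "f (complex_of_real t * e)"] C
    by (simp add: F_def divide_le_eq power2_eq_square mult_ac)
qed

lemma first_exit_point:
  fixes f :: "complex \<Rightarrow> 'a::metric_space"
  assumes f: "continuous_on (ball 0 1) f" and z0: "z0 \<in> ball 0 1" "f z0 \<notin> ball \<xi> r"
  obtains zs where "cmod zs \<le> cmod z0" "r \<le> dist \<xi> (f zs)"
    "\<And>w. cmod w < cmod zs \<Longrightarrow> f w \<in> ball \<xi> r"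
proof -
  define K where "K = cball 0 (cmod z0) \<inter> (\<lambda>z. dist \<xi> (f z)) -` {r..}"
  have "cball 0 (cmod z0) \<subseteq> ball 0 1" using z0 by auto
  then have "closed K" unfolding K_def
    by (intro continuous_closed_preimage) (auto intro!: continuous_intros continuous_on_subset[OF f])
  then have "compact K" by (metis K_def bounded_Int bounded_cball compact_eq_bounded_closed)
  have "z0 \<in> K" using z0 by (simp add: K_def dist_commute)
  then obtain zs where zs: "zs \<in> K" "\<And>z. z \<in> K \<Longrightarrow> cmod zs \<le> cmod z"
    using continuous_attains_inf[OF \<open>compact K\<close> _ continuous_on_norm_id[of K]] by blast
  show ?thesis
  proof (rule that)
    show "cmod zs \<le> cmod z0" using zs(2)[OF \<open>z0 \<in> K\<close>] .
    show "r \<le> dist \<xi> (f zs)" using zs(1) by (simp add: K_def)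
    show "f w \<in> ball \<xi> r" if "cmod w < cmod zs" for w
    proof (rule ccontr)
      assume "f w \<notin> ball \<xi> r"
      with that \<open>cmod zs \<le> cmod z0\<close> have "w \<in> K" by (simp add: K_def dist_commute)
      then show False using zs(2)[of w] that by simp
    qed
  qed
qed

lemma disc_oscillation_radial:
  fixes f :: "complex \<Rightarrow> complex^'n"
  assumes f: "vec_holomorphic_on (ball 0 1) f"
    and B: "\<And>x y. x \<in> ball 0 1 \<Longrightarrow> y \<in> ball 0 1 \<Longrightarrow> norm (f x - f y) < B"
    and e: "cmod e = 1" and t: "0 \<le> t" "t < \<rho>" "\<rho> < 1"
  shows "norm (f (complex_of_real \<rho> * e) - f (complex_of_real t * e)) \<le> B * (\<rho> - t) / (1 - t)"
proof -
  have "complex_of_real \<rho> * e - complex_of_real t * e = complex_of_real (\<rho> - t) * e"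
    by (simp add: algebra_simps)
  then have "cmod (complex_of_real \<rho> * e - complex_of_real t * e) = \<rho> - t"
    using e t by (simp only: norm_mult norm_of_real) simp
  moreover have "cmod (complex_of_real t * e) = t" using e t by (simp add: norm_mult)
  ultimately show ?thesis
    using disc_oscillation[OF f B, of "complex_of_real t * e" "complex_of_real \<rho> * e"] t by simp
qed

lemma exit_scale_bound:
  fixes C \<alpha> \<tau> B \<delta> M X d :: real
  defines "A \<equiv> (\<alpha> * \<tau> / (16 * C^2)) powr (1 / \<alpha>)"
  assumes pos: "0 < C" "0 < \<alpha>" "0 < \<tau>" "0 < B" "0 < \<delta>" "0 < M"
    and d: "0 \<le> d" "d \<le> 2 * \<delta>" and X: "\<tau> / (8 * B) * (M * \<delta>) \<le> X"
    and M: "32 * B * C / (\<tau> * A) \<le> M"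
  shows "2 * C^2 / \<alpha> * (2 * C * d / X) powr \<alpha> \<le> \<tau> / 8"
proof -
  have A: "0 < A" "A powr \<alpha> = \<alpha> * \<tau> / (16 * C^2)" using pos by (simp_all add: A_def powr_powr)
  have "0 < \<tau> / (8 * B) * (M * \<delta>)" using pos by simp
  then have "0 < X" using X by linarith
  have "2 * C * d / X \<le> 2 * C * (2 * \<delta>) / (\<tau> / (8 * B) * (M * \<delta>))"
    using d X pos by (intro frac_le) auto
  also have "\<dots> = 32 * B * C / (\<tau> * M)" using pos by (simp add: field_simps)
  also have "\<dots> \<le> A" using M A(1) pos by (simp add: divide_le_eq field_simps)
  finally have "(2 * C * d / X) powr \<alpha> \<le> A powr \<alpha>"
    using d pos \<open>0 < X\<close> by (intro powr_mono2) auto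
  then show ?thesis using A(2) pos by (simp add: divide_le_eq field_simps power2_eq_square)
qed

lemma disc_first_exit:
  fixes f :: "complex \<Rightarrow> complex^'n"
  assumes f: "vec_holomorphic_on (ball 0 1) f"
    and B: "\<And>x y. x \<in> ball 0 1 \<Longrightarrow> y \<in> ball 0 1 \<Longrightarrow> norm (f x - f y) < B"
    and f0: "dist (f 0) \<xi> < \<tau> / 8" and z0: "z0 \<in> ball 0 1" "f z0 \<notin> ball \<xi> (\<tau> / 2)"
  obtains zs where "cmod zs \<le> cmod z0" "\<tau> / (8 * B) < cmod zs" "\<tau> / 2 \<le> dist \<xi> (f zs)"
    "\<And>w. cmod w < cmod zs \<Longrightarrow> f w \<in> ball \<xi> (\<tau> / 2)"
proof -
  obtain zs where zs: "cmod zs \<le> cmod z0" "\<tau> / 2 \<le> dist \<xi> (f zs)"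
    "\<And>w. cmod w < cmod zs \<Longrightarrow> f w \<in> ball \<xi> (\<tau> / 2)"
    using first_exit_point[OF vec_holomorphic_on_imp_continuous_on[OF f open_ball] z0] by blast
  have "0 < B" using B[of 0 0] by simp
  have "\<tau> / 2 \<le> norm (f zs - f 0) + dist (f 0) \<xi>"
    using zs(2) dist_triangle[of \<xi> "f zs" "f 0"] by (simp add: dist_commute dist_norm norm_minus_commute)
  also have "\<dots> < B * cmod zs + \<tau> / 8"
    using disc_oscillation[OF f B, of 0 zs] zs(1) z0(1) f0 by simp
  finally have "\<tau> / 2 < B * cmod zs + \<tau> / 8" .
  moreover have "0 \<le> B * cmod zs" using \<open>0 < B\<close> by simp
  ultimately have "\<tau> < 8 * (B * cmod zs)" by linarith
  then have "\<tau> / (8 * B) < cmod zs" using \<open>0 < B\<close> by (simp add: field_simps)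
  with zs that show ?thesis by blast
qed

text \<open>Up to the first exit from \<open>ball \<xi> (\<tau> / 2)\<close> the disc lies in the chart, so the radial
  bound keeps it within \<open>\<tau> / 8\<close> of its centre until radius \<open>t1\<close>, hyperbolically close to the
  exit point; the remaining step is bounded by the Schwarz lemma alone. The constant \<open>M\<close> is
  chosen so that the radial bound at \<open>t1\<close> is at most \<open>\<tau> / 8\<close>.\<close>

lemma disc_stays_in_chart:
  fixes f :: "complex \<Rightarrow> complex^'n" and \<Phi> :: "complex^'n \<Rightarrow> complex^'n"
    and V \<Omega> :: "(complex^'n) set"
  defines "G \<equiv> \<Phi> ` (V \<inter> \<Omega>)"
  assumes \<Phi>: "holo_map \<Phi> V" "open G" "convex G"
    and bilip: "\<And>x y. x \<in> V \<Longrightarrow> y \<in> V \<Longrightarrow> norm (x - y) / C \<le> norm (\<Phi> x - \<Phi> y) \<and>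
        norm (\<Phi> x - \<Phi> y) \<le> C * norm (x - y)"
    and line_type: "\<And>x u. x \<in> G \<Longrightarrow> u \<noteq> 0 \<Longrightarrow> bdist_dir G x u \<le> ereal (C * bdist G x powr \<alpha>)"
    and C: "0 < C" and \<alpha>: "0 < \<alpha>"
    and B: "\<And>x y. x \<in> \<Omega> \<Longrightarrow> y \<in> \<Omega> \<Longrightarrow> norm (x - y) < B"
    and \<tau>: "0 < \<tau>" "ball \<xi> \<tau> \<subseteq> V"
    and f: "vec_holomorphic_on (ball 0 1) f" "f ` ball 0 1 \<subseteq> \<Omega>" "dist (f 0) \<xi> < \<tau> / 8"
    and y0: "y0 \<notin> \<Omega>" "norm (y0 - f 0) \<le> 2 * \<delta>" and \<delta>: "0 < \<delta>" "\<delta> < \<tau> / 8"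
    and M: "32 * B * C / (\<tau> * (\<alpha> * \<tau> / (16 * C^2)) powr (1 / \<alpha>)) \<le> M" "M * \<delta> < 1"
  shows "f ` ball 0 (1 - M * \<delta>) \<subseteq> ball \<xi> (\<tau> / 2)"
proof (rule ccontr)
  assume "\<not> ?thesis"
  then obtain z0 where "z0 \<in> ball 0 (1 - M * \<delta>)" and z0: "f z0 \<notin> ball \<xi> (\<tau> / 2)" by blast
  then have z0: "cmod z0 < 1 - M * \<delta>" "f z0 \<notin> ball \<xi> (\<tau> / 2)" using z0 by auto
  have "f 0 \<in> \<Omega>" using f(2) by auto
  then have B0: "0 < B" using B[of "f 0" "f 0"] by simp
  define \<eta> where "\<eta> = \<tau> / (8 * B)"
  have \<eta>: "0 < \<eta>" using \<tau> B0 by (simp add: \<eta>_def)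
  have "0 < 32 * B * C / (\<tau> * (\<alpha> * \<tau> / (16 * C^2)) powr (1 / \<alpha>))"
    using B0 C \<tau> \<alpha> by (intro divide_pos_pos mult_pos_pos) auto
  then have M0: "0 < M" using M(1) by linarith
  have B': "norm (f x - f y) < B" if "x \<in> ball 0 1" "y \<in> ball 0 1" for x y
    using B f(2) that by (meson image_subset_iff)
  have M\<delta>: "0 < M * \<delta>" using M0 \<delta> by simp
  then have "z0 \<in> ball 0 1" using z0(1) by simp
  from disc_first_exit[OF f(1) B' f(3) this z0(2)]
  obtain zs where zs: "cmod zs \<le> cmod z0" "\<eta> < cmod zs" "\<tau> / 2 \<le> dist \<xi> (f zs)"
    "\<And>w. cmod w < cmod zs \<Longrightarrow> f w \<in> ball \<xi> (\<tau> / 2)" unfolding \<eta>_def by blast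
  define \<rho> where "\<rho> = cmod zs"
  have \<rho>1: "\<rho> < 1 - M * \<delta>" and "\<eta> < \<rho>" using zs(1,2) z0(1) by (simp_all add: \<rho>_def)
  define t1 where "t1 = \<rho> - \<eta> * (1 - \<rho>)"
  define e where "e = zs / complex_of_real \<rho>"
  have \<rho>: "0 < \<rho>" "\<rho> < 1" using \<open>\<eta> < \<rho>\<close> \<eta> \<rho>1 M\<delta> by auto
  have "0 \<le> \<eta> * \<rho>" "0 < \<eta> * (1 - \<rho>)" using \<eta> \<rho> by auto
  then have t1: "0 \<le> t1" "t1 < \<rho>" using \<open>\<eta> < \<rho>\<close> by (auto simp: t1_def algebra_simps)
  have e: "cmod e = 1" "zs = complex_of_real \<rho> * e" using \<rho> by (auto simp: e_def \<rho>_def norm_divide)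
  have "norm (f (complex_of_real t1 * e) - f 0)
      \<le> 2 * C^2 / \<alpha> * (2 * C * norm (f 0 - y0) / (\<rho> - t1)) powr \<alpha>"
  proof (rule chart_disc_radial_bound[OF \<Phi>[unfolded G_def] bilip line_type[unfolded G_def] C \<alpha>
        vec_holomorphic_on_subset[OF f(1)] _ _ _ e(1) t1])
    show "f ` ball 0 \<rho> \<subseteq> V \<inter> \<Omega>"
    proof
      fix y assume "y \<in> f ` ball 0 \<rho>"
      then obtain w where w: "cmod w < \<rho>" "y = f w" by auto
      then have "y \<in> ball \<xi> \<tau>" using zs(4)[of w] \<tau>(1) by (simp add: \<rho>_def)
      moreover have "y \<in> \<Omega>" using w \<rho> f(2) by auto
      ultimately show "y \<in> V \<inter> \<Omega>" using \<tau>(2) by blast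
    qed
    have "dist \<xi> y0 < \<tau>"
      using dist_triangle[of \<xi> y0 "f 0"] f(3) y0(2) \<delta> by (simp add: dist_commute dist_norm)
    then show "y0 \<in> V - \<Omega>" using \<tau> y0(1) by auto
  qed (use \<rho> in auto)
  also have "\<dots> \<le> \<tau> / 8"
  proof (rule exit_scale_bound[OF C \<alpha> \<tau>(1) B0 \<delta>(1) M0 _ _ _ M(1)])
    have "\<eta> * (M * \<delta>) \<le> \<eta> * (1 - \<rho>)" using \<rho>1 \<eta> by (intro mult_left_mono) auto
    then show "\<tau> / (8 * B) * (M * \<delta>) \<le> \<rho> - t1" by (simp add: t1_def \<eta>_def)
  qed (use y0(2) in \<open>auto simp: norm_minus_commute\<close>)
  finally have near: "norm (f (complex_of_real t1 * e) - f 0) \<le> \<tau> / 8" .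
  have "norm (f zs - f (complex_of_real t1 * e)) \<le> B * (\<rho> - t1) / (1 - t1)"
    unfolding e(2) by (rule disc_oscillation_radial[OF f(1) B' e(1) t1 \<rho>(2)])
  also have "\<dots> = B * (\<eta> / (1 + \<eta>))"
  proof -
    have "\<rho> - t1 = \<eta> * (1 - \<rho>)" "1 - t1 = (1 + \<eta>) * (1 - \<rho>)" by (simp_all add: t1_def algebra_simps)
    then show ?thesis using \<rho> by simp
  qed
  also have "\<dots> \<le> \<tau> / 8"
    using \<eta> B0 by (simp add: \<eta>_def field_simps)
  finally have far: "norm (f zs - f (complex_of_real t1 * e)) \<le> \<tau> / 8" .
  have "dist \<xi> (f zs) \<le> dist \<xi> (f 0) + norm (f zs - f (complex_of_real t1 * e))
      + norm (f (complex_of_real t1 * e) - f 0)"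
    using dist_triangle[of \<xi> "f zs" "f 0"]
      norm_triangle_ineq[of "f zs - f (complex_of_real t1 * e)" "f (complex_of_real t1 * e) - f 0"]
    by (simp add: dist_norm norm_minus_commute)
  then show False using zs(3) near far f(3) \<tau>(1) by (simp add: dist_commute)
qed

lemma locally_convex_atlas_open_image:
  assumes "locally_convex_atlas \<Omega> V \<Phi>" "open \<Omega>" "\<xi> \<in> frontier \<Omega>"
  shows "open (\<Phi> \<xi> ` (V \<xi> \<inter> \<Omega>))"
proof (rule invariance_of_domain)
  have chart: "open (V \<xi>)" "biholo_onto_image (\<Phi> \<xi>) (V \<xi>)"
    using assms(1,3) unfolding locally_convex_atlas_def by auto
  show "continuous_on (V \<xi> \<inter> \<Omega>) (\<Phi> \<xi>)"
  proof (intro continuous_at_imp_continuous_on ballI)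
    fix x assume "x \<in> V \<xi> \<inter> \<Omega>"
    then obtain D where "(\<Phi> \<xi> has_derivative D) (at x)"
      using chart(2) unfolding biholo_onto_image_def holo_map_def by blast
    then show "isCont (\<Phi> \<xi>) x" by (rule has_derivative_continuous)
  qed
  show "inj_on (\<Phi> \<xi>) (V \<xi> \<inter> \<Omega>)"
    using chart(2) by (simp add: biholo_onto_image_def inj_on_Int)
  show "open (V \<xi> \<inter> \<Omega>)" using chart(1) assms(2) by blast
qed

lemma bdist_witness:
  assumes "open \<Omega>" "p \<in> \<Omega>" "\<xi> \<notin> \<Omega>"
  obtains y0 where "y0 \<notin> \<Omega>" "norm (y0 - p) \<le> 2 * bdist \<Omega> p" "0 < bdist \<Omega> p"
    "bdist \<Omega> p \<le> dist p \<xi>"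
proof -
  have C: "UNIV - \<Omega> \<noteq> {}" "closed (UNIV - \<Omega>)" "p \<notin> UNIV - \<Omega>" using assms by auto
  have pos: "0 < bdist \<Omega> p" unfolding bdist_def by (rule infdist_pos_not_in_closed[OF C(2,1,3)])
  have le: "bdist \<Omega> p \<le> dist p \<xi>" unfolding bdist_def by (rule infdist_le) (use assms in auto)
  have "\<exists>y0\<in>UNIV - \<Omega>. dist p y0 < 2 * bdist \<Omega> p"
  proof (rule ccontr)
    assume "\<not> ?thesis"
    then have "2 * bdist \<Omega> p \<le> infdist p (UNIV - \<Omega>)"
      unfolding infdist_notempty[OF C(1)] by (intro cINF_greatest C(1)) (auto simp: not_less)
    then show False using pos by (simp add: bdist_def)
  qed
  then show ?thesis using that pos le by (force simp: dist_norm norm_minus_commute)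
qed

lemma inverse_one_minus_le_exp:
  fixes x :: real
  assumes "0 \<le> x" "x \<le> 1 / 2"
  shows "1 / (1 - x) \<le> exp (2 * x)"
proof -
  have "1 \<le> (1 + 2 * x) * (1 - x)" using assms mult_left_le[of "2 * x" x] by (simp add: algebra_simps)
  then have "1 / (1 - x) \<le> 1 + 2 * x" using assms by (simp add: divide_le_eq)
  also have "\<dots> \<le> exp (2 * x)" by (rule exp_ge_add_one_self)
  finally show ?thesis .
qed

lemma good_atlasE:
  fixes \<Omega> :: "(complex^'n) set"
  assumes "open \<Omega>" "good_atlas \<Omega> L V \<Phi>"
  obtains C \<tau> where "0 < C" "0 < \<tau>"
    and "\<And>\<xi>. \<xi> \<in> frontier \<Omega> \<Longrightarrow> open (V \<xi>) \<and> ball \<xi> \<tau> \<subseteq> V \<xi> \<and> holo_map (\<Phi> \<xi>) (V \<xi>) \<and>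
        open (\<Phi> \<xi> ` (V \<xi> \<inter> \<Omega>)) \<and> convex (\<Phi> \<xi> ` (V \<xi> \<inter> \<Omega>))"
    and "\<And>\<xi> x u. \<xi> \<in> frontier \<Omega> \<Longrightarrow> x \<in> \<Phi> \<xi> ` (V \<xi> \<inter> \<Omega>) \<Longrightarrow> u \<noteq> 0 \<Longrightarrow>
        bdist_dir (\<Phi> \<xi> ` (V \<xi> \<inter> \<Omega>)) x u
          \<le> ereal (C * bdist (\<Phi> \<xi> ` (V \<xi> \<inter> \<Omega>)) x powr (1 / real L))"
    and "\<And>\<xi> x y. \<xi> \<in> frontier \<Omega> \<Longrightarrow> x \<in> V \<xi> \<Longrightarrow> y \<in> V \<xi> \<Longrightarrow>
        norm (x - y) / C \<le> norm (\<Phi> \<xi> x - \<Phi> \<xi> y) \<and> norm (\<Phi> \<xi> x - \<Phi> \<xi> y) \<le> C * norm (x - y)"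
proof -
  obtain C \<tau> where C\<tau>: "0 < C" "0 < \<tau>" and atlas: "locally_convex_atlas \<Omega> V \<Phi>"
    and good: "\<And>\<xi>. \<xi> \<in> frontier \<Omega> \<Longrightarrow> ball \<xi> \<tau> \<subseteq> V \<xi> \<and>
       (\<forall>x\<in>\<Phi> \<xi> ` (V \<xi> \<inter> \<Omega>). \<forall>u. u \<noteq> 0 \<longrightarrow> bdist_dir (\<Phi> \<xi> ` (V \<xi> \<inter> \<Omega>)) x u
            \<le> ereal (C * bdist (\<Phi> \<xi> ` (V \<xi> \<inter> \<Omega>)) x powr (1 / real L))) \<and>
       (\<forall>x\<in>V \<xi>. \<forall>y\<in>V \<xi>. norm (x - y) / C \<le> norm (\<Phi> \<xi> x - \<Phi> \<xi> y) \<and>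
          norm (\<Phi> \<xi> x - \<Phi> \<xi> y) \<le> C * norm (x - y))"
    using assms(2) unfolding good_atlas_def by auto
  show ?thesis
  proof (rule that[OF C\<tau>])
    fix \<xi> assume \<xi>: "\<xi> \<in> frontier \<Omega>"
    show "open (V \<xi>) \<and> ball \<xi> \<tau> \<subseteq> V \<xi> \<and> holo_map (\<Phi> \<xi>) (V \<xi>) \<and>
        open (\<Phi> \<xi> ` (V \<xi> \<inter> \<Omega>)) \<and> convex (\<Phi> \<xi> ` (V \<xi> \<inter> \<Omega>))"
      using locally_convex_atlas_open_image[OF atlas assms(1) \<xi>] good[OF \<xi>] atlas \<xi>
      by (simp add: locally_convex_atlas_def biholo_onto_image_def)
  next
    fix \<xi> x and u :: "complex^'n"
    assume "\<xi> \<in> frontier \<Omega>" "x \<in> \<Phi> \<xi> ` (V \<xi> \<inter> \<Omega>)" "u \<noteq> 0"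
    then show "bdist_dir (\<Phi> \<xi> ` (V \<xi> \<inter> \<Omega>)) x u
        \<le> ereal (C * bdist (\<Phi> \<xi> ` (V \<xi> \<inter> \<Omega>)) x powr (1 / real L))"
      using good by blast
  next
    fix \<xi> x y assume "\<xi> \<in> frontier \<Omega>" "x \<in> V \<xi>" "y \<in> V \<xi>"
    then show "norm (x - y) / C \<le> norm (\<Phi> \<xi> x - \<Phi> \<xi> y) \<and> norm (\<Phi> \<xi> x - \<Phi> \<xi> y) \<le> C * norm (x - y)"
      using good by blast
  qed
qed

lemma discs_stay_in_uniform_radius:
  fixes \<Omega> :: "(complex^'n) set"
  assumes B: "\<And>x y. x \<in> \<Omega> \<Longrightarrow> y \<in> \<Omega> \<Longrightarrow> norm (x - y) < B" and "0 < B"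
    and \<tau>: "0 < \<tau>" "\<And>\<xi>. \<xi> \<in> frontier \<Omega> \<Longrightarrow> ball \<xi> \<tau> \<subseteq> V \<xi>"
  obtains r where "0 < r" "r < 1"
    "\<And>\<xi> p. \<xi> \<in> frontier \<Omega> \<Longrightarrow> p \<in> ball \<xi> (\<tau> / 2) \<Longrightarrow> discs_stay_in \<Omega> p r (V \<xi>)"
proof -
  define r where "r = min (1 / 2) (\<tau> / (2 * B))"
  have r: "0 < r" "r < 1" using \<tau> \<open>0 < B\<close> by (auto simp: r_def)
  have "B * r \<le> B * (\<tau> / (2 * B))" using \<open>0 < B\<close> by (intro mult_left_mono) (auto simp: r_def)
  then have Br: "B * r \<le> \<tau> / 2" using \<open>0 < B\<close> by simp
  show ?thesis
  proof (rule that[OF r])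
    fix \<xi> p assume "\<xi> \<in> frontier \<Omega>" "p \<in> ball \<xi> (\<tau> / 2)"
    then have "ball p (B * r) \<subseteq> ball \<xi> \<tau>" using Br by (auto simp: ball_subset_ball_iff dist_commute)
    then have "ball p (B * r) \<subseteq> V \<xi>" using \<tau>(2)[OF \<open>\<xi> \<in> frontier \<Omega>\<close>] by blast
    then show "discs_stay_in \<Omega> p r (V \<xi>)"
      using discs_stay_in_ball[OF B r(1) less_imp_le[OF r(2)]] unfolding discs_stay_in_def by blast
  qed
qed

lemma discs_stay_in_line_type:
  fixes \<Omega> :: "(complex^'n) set"
  assumes "bounded \<Omega>" "open \<Omega>" "good_atlas \<Omega> L V \<Phi>" "0 < L"
  obtains M \<epsilon> where "0 < M" "0 < \<epsilon>"
    "\<And>\<xi> p. \<xi> \<in> frontier \<Omega> \<Longrightarrow> p \<in> ball \<xi> \<epsilon> \<inter> \<Omega> \<Longrightarrow>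
       M * bdist \<Omega> p \<le> 1 / 2 \<and> bdist \<Omega> p \<le> 1 \<and> discs_stay_in \<Omega> p (1 - M * bdist \<Omega> p) (V \<xi>)"
proof -
  obtain C \<tau> where C: "0 < C" and \<tau>: "0 < \<tau>" and chart: "\<And>\<xi>. \<xi> \<in> frontier \<Omega> \<Longrightarrow>
      open (V \<xi>) \<and> ball \<xi> \<tau> \<subseteq> V \<xi> \<and> holo_map (\<Phi> \<xi>) (V \<xi>) \<and>
      open (\<Phi> \<xi> ` (V \<xi> \<inter> \<Omega>)) \<and> convex (\<Phi> \<xi> ` (V \<xi> \<inter> \<Omega>))"
    and directional: "\<And>\<xi> x u. \<xi> \<in> frontier \<Omega> \<Longrightarrow> x \<in> \<Phi> \<xi> ` (V \<xi> \<inter> \<Omega>) \<Longrightarrow> u \<noteq> 0 \<Longrightarrow>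
        bdist_dir (\<Phi> \<xi> ` (V \<xi> \<inter> \<Omega>)) x u
          \<le> ereal (C * bdist (\<Phi> \<xi> ` (V \<xi> \<inter> \<Omega>)) x powr (1 / real L))"
    and bilip: "\<And>\<xi> x y. \<xi> \<in> frontier \<Omega> \<Longrightarrow> x \<in> V \<xi> \<Longrightarrow> y \<in> V \<xi> \<Longrightarrow>
        norm (x - y) / C \<le> norm (\<Phi> \<xi> x - \<Phi> \<xi> y) \<and> norm (\<Phi> \<xi> x - \<Phi> \<xi> y) \<le> C * norm (x - y)"
    using good_atlasE[OF assms(2,3)] by blast
  define B where "B = diameter \<Omega> + 1"
  have B: "norm (x - y) < B" if "x \<in> \<Omega>" "y \<in> \<Omega>" for x y
    using diameter_bounded_bound[OF assms(1) that] by (simp add: B_def dist_norm)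
  have B0: "0 < B" using diameter_ge_0[OF assms(1)] by (simp add: B_def)
  define \<alpha> where "\<alpha> = 1 / real L"
  have \<alpha>: "0 < \<alpha>" using assms(4) by (simp add: \<alpha>_def)
  define M where "M = 32 * B * C / (\<tau> * (\<alpha> * \<tau> / (16 * C^2)) powr (1 / \<alpha>))"
  have M: "0 < M" using B0 C \<tau> \<alpha> by (auto simp: M_def)
  define \<epsilon> where "\<epsilon> = min (\<tau> / 16) (min (1 / (2 * M)) 1)"
  have \<epsilon>: "0 < \<epsilon>" "\<epsilon> \<le> \<tau> / 16" "\<epsilon> \<le> 1 / (2 * M)" "\<epsilon> \<le> 1"
    using \<tau> M by (simp_all add: \<epsilon>_def)
  have "M * \<epsilon> \<le> 1 / 2" using mult_left_mono[OF \<epsilon>(3), of M] M by simp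
  show ?thesis
  proof (rule that[OF M \<epsilon>(1)])
    fix \<xi> p assume \<xi>p: "\<xi> \<in> frontier \<Omega>" "p \<in> ball \<xi> \<epsilon> \<inter> \<Omega>"
    have "\<xi> \<notin> \<Omega>" using \<xi>p(1) assms(2) by (simp add: frontier_def interior_open)
    define \<delta> where "\<delta> = bdist \<Omega> p"
    obtain y0 where y0: "y0 \<notin> \<Omega>" "norm (y0 - p) \<le> 2 * \<delta>" and "0 < \<delta>" "\<delta> \<le> dist p \<xi>"
      using bdist_witness[OF assms(2) _ \<open>\<xi> \<notin> \<Omega>\<close>] \<xi>p unfolding \<delta>_def by blast
    then have \<delta>: "0 < \<delta>" "\<delta> < \<epsilon>" using \<xi>p by (auto simp: dist_commute)
    then have M\<delta>: "M * \<delta> \<le> 1 / 2"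
      using mult_strict_left_mono[OF \<delta>(2) M] \<open>M * \<epsilon> \<le> 1 / 2\<close> by linarith
    have "discs_stay_in \<Omega> p (1 - M * \<delta>) (V \<xi>)"
      unfolding discs_stay_in_def
    proof (intro allI impI)
      fix f assume f: "holo_disc f \<and> f ` ball 0 1 \<subseteq> \<Omega> \<and> f 0 = p"
      have "f ` ball 0 (1 - M * \<delta>) \<subseteq> ball \<xi> (\<tau> / 2)"
      proof (rule disc_stays_in_chart[of "\<Phi> \<xi>" "V \<xi>" \<Omega> C \<alpha> B \<tau> \<xi> f y0 \<delta> M])
        show "x \<in> \<Phi> \<xi> ` (V \<xi> \<inter> \<Omega>) \<Longrightarrow> u \<noteq> 0 \<Longrightarrow> bdist_dir (\<Phi> \<xi> ` (V \<xi> \<inter> \<Omega>)) x u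
            \<le> ereal (C * bdist (\<Phi> \<xi> ` (V \<xi> \<inter> \<Omega>)) x powr \<alpha>)" for x u
          using directional[OF \<xi>p(1)] unfolding \<alpha>_def .
        show "vec_holomorphic_on (ball 0 1) f" using f by (simp add: holo_disc_iff)
        show "dist (f 0) \<xi> < \<tau> / 8" "\<delta> < \<tau> / 8" "norm (y0 - f 0) \<le> 2 * \<delta>"
          using f \<xi>p \<delta> \<epsilon> y0 \<tau> by (auto simp: dist_commute)
        show "M * \<delta> < 1" using M\<delta> by simp
        show "32 * B * C / (\<tau> * (\<alpha> * \<tau> / (16 * C^2)) powr (1 / \<alpha>)) \<le> M" by (simp add: M_def)
      qed (use chart[OF \<xi>p(1)] bilip[OF \<xi>p(1)] f C \<alpha> B \<tau> y0 \<delta> in simp_all)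
      moreover have "ball \<xi> (\<tau> / 2) \<subseteq> V \<xi>" using chart[OF \<xi>p(1)] \<tau> by auto
      ultimately show "f ` ball 0 (1 - M * \<delta>) \<subseteq> V \<xi>" by blast
    qed
    then show "M * bdist \<Omega> p \<le> 1 / 2 \<and> bdist \<Omega> p \<le> 1 \<and>
        discs_stay_in \<Omega> p (1 - M * bdist \<Omega> p) (V \<xi>)"
      using M\<delta> \<delta> \<epsilon>(4) by (simp add: \<delta>_def)
  qed
qed

lemma good_atlas_localization:
  fixes \<Omega> :: "(complex^'n) set"
  assumes "bounded \<Omega>" "open \<Omega>" "good_atlas \<Omega> L V \<Phi>"
  obtains c \<epsilon> where "0 < c" "0 < \<epsilon>"
    "\<And>\<xi> p. \<xi> \<in> frontier \<Omega> \<Longrightarrow> p \<in> ball \<xi> \<epsilon> \<inter> \<Omega> \<Longrightarrow> \<exists>r. 0 < r \<and> r \<le> 1 \<and>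
        1 / r \<le> exp (c * bdist \<Omega> p powr (1 / real L)) \<and> discs_stay_in \<Omega> p r (V \<xi>)"
proof (cases "L = 0")
  case True
  \<comment> \<open>Then \<open>1 / real L = 0\<close>, and the claim is a uniform bound with a fixed radius.\<close>
  obtain \<tau> where "0 < \<tau>" and chart: "\<And>\<xi>. \<xi> \<in> frontier \<Omega> \<Longrightarrow> ball \<xi> \<tau> \<subseteq> V \<xi>"
    using good_atlasE[OF assms(2,3)] by metis
  have "norm (x - y) < diameter \<Omega> + 1" if "x \<in> \<Omega>" "y \<in> \<Omega>" for x y
    using diameter_bounded_bound[OF assms(1) that] by (simp add: dist_norm)
  moreover have "0 < diameter \<Omega> + 1" using diameter_ge_0[OF assms(1)] by simp
  ultimately obtain r where r: "0 < r" "r < 1" and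
    discs: "\<And>\<xi> p. \<xi> \<in> frontier \<Omega> \<Longrightarrow> p \<in> ball \<xi> (\<tau> / 2) \<Longrightarrow> discs_stay_in \<Omega> p r (V \<xi>)"
    using discs_stay_in_uniform_radius[OF _ _ \<open>0 < \<tau>\<close> chart] by metis
  show ?thesis
  proof (rule that[of "ln (1 / r)" "\<tau> / 2"])
    fix \<xi> p assume \<xi>p: "\<xi> \<in> frontier \<Omega>" "p \<in> ball \<xi> (\<tau> / 2) \<inter> \<Omega>"
    then have "0 < bdist \<Omega> p"
      using bdist_witness[OF assms(2), of p \<xi>] assms(2) by (force simp: frontier_def interior_open)
    then show "\<exists>r'. 0 < r' \<and> r' \<le> 1 \<and> 1 / r' \<le> exp (ln (1 / r) * bdist \<Omega> p powr (1 / real L))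
        \<and> discs_stay_in \<Omega> p r' (V \<xi>)"
      using r True discs[OF \<xi>p(1)] \<xi>p(2) by (intro exI[of _ r]) auto
  qed (use r \<open>0 < \<tau>\<close> in auto)
next
  case False
  then obtain M \<epsilon> where "0 < M" "0 < \<epsilon>" and discs: "\<And>\<xi> p. \<xi> \<in> frontier \<Omega> \<Longrightarrow>
      p \<in> ball \<xi> \<epsilon> \<inter> \<Omega> \<Longrightarrow> M * bdist \<Omega> p \<le> 1 / 2 \<and> bdist \<Omega> p \<le> 1 \<and>
        discs_stay_in \<Omega> p (1 - M * bdist \<Omega> p) (V \<xi>)"
    using discs_stay_in_line_type[OF assms] by blast
  show ?thesis
  proof (rule that[of "2 * M" \<epsilon>])
    fix \<xi> p assume \<xi>p: "\<xi> \<in> frontier \<Omega>" "p \<in> ball \<xi> \<epsilon> \<inter> \<Omega>"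
    define \<delta> where "\<delta> = bdist \<Omega> p"
    have \<delta>: "0 \<le> \<delta>" "M * \<delta> \<le> 1 / 2" "\<delta> \<le> 1"
      using discs[OF \<xi>p] by (simp_all add: \<delta>_def bdist_def infdist_nonneg)
    have "1 / (1 - M * \<delta>) \<le> exp (2 * (M * \<delta>))"
      by (rule inverse_one_minus_le_exp) (use \<open>0 < M\<close> \<delta> in auto)
    also have "\<delta> \<le> \<delta> powr (1 / real L)" using powr_mono'[of "1 / real L" 1 \<delta>] \<delta> False by simp
    then have "exp (2 * (M * \<delta>)) \<le> exp (2 * M * \<delta> powr (1 / real L))" using \<open>0 < M\<close> by simp
    finally show "\<exists>r. 0 < r \<and> r \<le> 1 \<and> 1 / r \<le> exp (2 * M * bdist \<Omega> p powr (1 / real L))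
        \<and> discs_stay_in \<Omega> p r (V \<xi>)"
      using discs[OF \<xi>p] \<delta> \<open>0 < M\<close> by (intro exI[of _ "1 - M * \<delta>"]) (auto simp: \<delta>_def)
  qed (use \<open>0 < M\<close> \<open>0 < \<epsilon>\<close> in auto)
qed

theorem theorem16p1:
  fixes \<Omega> :: "(complex^'n) set" and L :: nat
    and V :: "complex^'n \<Rightarrow> (complex^'n) set" and \<Phi> :: "complex^'n \<Rightarrow> complex^'n \<Rightarrow> complex^'n"
  assumes "bounded \<Omega>" and "open \<Omega>"
    and "locally_convexifiable \<Omega>"
    and "finite_local_line_type \<Omega> L"
    and "good_atlas \<Omega> L V \<Phi>"
  shows "\<exists>c \<epsilon>. c > 0 \<and> \<epsilon> > 0 \<and>
    (\<forall>\<xi>\<in>frontier \<Omega>. \<forall>p\<in>ball \<xi> \<epsilon> \<inter> \<Omega>. \<forall>v.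
        kobayashi \<Omega> p v \<le> kobayashi (\<Omega> \<inter> V \<xi>) p v \<and>
        kobayashi (\<Omega> \<inter> V \<xi>) p v \<le> exp (c * bdist \<Omega> p powr (1 / real L)) * kobayashi \<Omega> p v)"
proof -
  obtain c \<epsilon> where c\<epsilon>: "0 < c" "0 < \<epsilon>" and loc: "\<And>\<xi> p. \<xi> \<in> frontier \<Omega> \<Longrightarrow> p \<in> ball \<xi> \<epsilon> \<inter> \<Omega> \<Longrightarrow>
      \<exists>r. 0 < r \<and> r \<le> 1 \<and> 1 / r \<le> exp (c * bdist \<Omega> p powr (1 / real L)) \<and> discs_stay_in \<Omega> p r (V \<xi>)"
    using good_atlas_localization[OF assms(1,2,5)] by blast
  have "kobayashi \<Omega> p v \<le> kobayashi (\<Omega> \<inter> V \<xi>) p v \<and>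
      kobayashi (\<Omega> \<inter> V \<xi>) p v \<le> exp (c * bdist \<Omega> p powr (1 / real L)) * kobayashi \<Omega> p v"
    if \<xi>p: "\<xi> \<in> frontier \<Omega>" "p \<in> ball \<xi> \<epsilon> \<inter> \<Omega>" for \<xi> p v
  proof
    obtain r where r: "0 < r" "r \<le> 1" "1 / r \<le> exp (c * bdist \<Omega> p powr (1 / real L))"
      and discs: "discs_stay_in \<Omega> p r (V \<xi>)" using loc[OF \<xi>p] by blast
    have "open (V \<xi>)"
      using assms(5) \<xi>p(1) by (simp add: good_atlas_def locally_convex_atlas_def)
    moreover have "p \<in> V \<xi>" using discs_stay_in_center[OF discs _ r(1)] \<xi>p(2) by blast
    ultimately show "kobayashi \<Omega> p v \<le> kobayashi (\<Omega> \<inter> V \<xi>) p v"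
      using \<xi>p(2) assms(2) by (intro kobayashi_antimono) auto
    have "kobayashi (\<Omega> \<inter> V \<xi>) p v \<le> 1 / r * kobayashi \<Omega> p v"
      using kobayashi_localize[OF assms(2) _ r(1,2) discs] \<xi>p(2) by simp
    also have "\<dots> \<le> exp (c * bdist \<Omega> p powr (1 / real L)) * kobayashi \<Omega> p v"
      using r(3) kobayashi_nonneg[OF assms(2), of p v] \<xi>p(2) by (intro mult_right_mono) auto
    finally show "kobayashi (\<Omega> \<inter> V \<xi>) p v \<le> exp (c * bdist \<Omega> p powr (1 / real L)) * kobayashi \<Omega> p v" .
  qed
  then show ?thesis using c\<epsilon> by blast
qed

end
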